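(* Let $(X,\langle\cdot,\cdot\rangle,\|\cdot\|)$ be a separable Hilbert space, $A:D(A)\subset X\to X$ a densely defined self-adjoint linear operator with $\langle Ax,x\rangle\ge0$ for all $x\in D(A)$ and with $(\lambda I+A)^{-1}$ compact for some $\lambda>0$; let $0\le\lambda_1\le\lambda_2\le\dots$ be its eigenvalues with associated orthonormal eigenbasis $\{\varphi_k\}_{k\ge1}$. Let $B:D(B)\subset X\to X$ be linear with $D(A^{1/2})\subset D(B)$ and $\|B\varphi\|\le C_B\|\varphi\|_{1/2}$ for all $\varphi\in D(A^{1/2})$, for some constant $C_B>0$. Let $T>0$, $v_0\in D(A^{1/2})$ and $p\in L^2(0,T)$ be such that $\|p\|_{L^2(0,T)}\le N_T\|v_0\|$ for some constant $N_T>0$. Let $v(\cdot;v_0,p)$ be the solution of $$v'(t)+Av(t)+p(t)Bv(t)+p(t)B\varphi_1=0,\ t\in[0,T],\qquad v(0)=v_0.$$ Then $$\sup_{t\in[0,T]}\|v(t;v_0,p)\|_{1/2}^2\le C_{1,1}(T,\|v_0\|_{1/2})\,\|v_0\|_{1/2}^2,$$ where $$C_{1,1}(T,\|v_0\|_{1/2}):=e^{C_BN_T\left(\frac52C_BN_T\|v_0\|_{1/2}+2\sqrt T\right)\|v_0\|_{1/2}+T}\Big(1+\tfrac52C_B^2(1+\lambda_1^{1/2})^2N_T^2+\tfrac32C_B^2N_T^2\big(C_B^2(1+\lambda_1^{1/2})^2N_T^2+1\big)\|v_0\|_{1/2}^2\Big).$$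
   Context: For $s\ge0$, $D(A^s)=\{x:\sum_k\lambda_k^{2s}|\langle x,\varphi_k\rangle|^2<\infty\}$, $A^sx=\sum_k\lambda_k^s\langle x,\varphi_k\rangle\varphi_k$, and $\|x\|_{s}:=\|x\|_{D(A^s)}=(\|x\|^2+\|A^sx\|^2)^{1/2}$. The solution $v$ is the unique mild (equivalently strict) solution in $C([0,T];D(A^{1/2}))\cap H^1(0,T;X)\cap L^2(0,T;D(A))$ of the stated Cauchy problem (the equation with source term $p(t)B\varphi_1\in L^2(0,T;X)$). *)

theory Defs
  imports "HOL-Analysis.Analysis"
begin

text \<open>Standing setting: a real separable Hilbert space is a type of class
  real_inner + complete_space + second_countable_topology.
  The spectral data (lam k, phi k), k = 0,1,2,... correspond to the paper's
  (lambda_(k+1), varphi_(k+1)).\<close>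

definition lin_op_on :: "'a::real_vector set \<Rightarrow> ('a \<Rightarrow> 'a) \<Rightarrow> bool" where
  "lin_op_on D A \<longleftrightarrow> subspace D \<and>
     (\<forall>x\<in>D. \<forall>y\<in>D. A (x + y) = A x + A y) \<and>
     (\<forall>c. \<forall>x\<in>D. A (c *\<^sub>R x) = c *\<^sub>R A x)"

text \<open>Densely defined self-adjoint operator: D dense, and the adjoint A* (domain
  {y. exists z. forall x in D. <Ax,y> = <x,z>}) coincides with A.\<close>
definition self_adjoint_op :: "'a::real_inner set \<Rightarrow> ('a \<Rightarrow> 'a) \<Rightarrow> bool" where
  "self_adjoint_op D A \<longleftrightarrow> lin_op_on D A \<and> closure D = UNIV \<and>
     (\<forall>y. (\<exists>z. \<forall>x\<in>D. inner (A x) y = inner x z) \<longleftrightarrow> y \<in> D) \<and>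
     (\<forall>x\<in>D. \<forall>y\<in>D. inner (A x) y = inner x (A y))"

definition compact_resolvent_at :: "'a::real_normed_vector set \<Rightarrow> ('a \<Rightarrow> 'a) \<Rightarrow> real \<Rightarrow> bool" where
  "compact_resolvent_at D A l \<longleftrightarrow>
     bij_betw (\<lambda>x. l *\<^sub>R x + A x) D UNIV \<and>
     (\<forall>S. bounded S \<longrightarrow> compact (closure (inv_into D (\<lambda>x. l *\<^sub>R x + A x) ` S)))"

text \<open>Fractional powers via the eigen-expansion (used for s > 0).\<close>
definition frac_dom :: "(nat \<Rightarrow> real) \<Rightarrow> (nat \<Rightarrow> 'a::real_inner) \<Rightarrow> real \<Rightarrow> 'a set" where
  "frac_dom lam phi s = {x. summable (\<lambda>k. (lam k powr (2 * s)) * (inner x (phi k)) ^ 2)}"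

definition frac_pow :: "(nat \<Rightarrow> real) \<Rightarrow> (nat \<Rightarrow> 'a::real_inner) \<Rightarrow> real \<Rightarrow> 'a \<Rightarrow> 'a" where
  "frac_pow lam phi s x = (\<Sum>k. (lam k powr s * inner x (phi k)) *\<^sub>R phi k)"

definition frac_norm :: "(nat \<Rightarrow> real) \<Rightarrow> (nat \<Rightarrow> 'a::real_inner) \<Rightarrow> real \<Rightarrow> 'a \<Rightarrow> real" where
  "frac_norm lam phi s x = sqrt ((norm x)\<^sup>2 + (norm (frac_pow lam phi s x))\<^sup>2)"

definition sgrp :: "(nat \<Rightarrow> real) \<Rightarrow> (nat \<Rightarrow> 'a::real_inner) \<Rightarrow> real \<Rightarrow> 'a \<Rightarrow> 'a" where
  "sgrp lam phi t x = (\<Sum>k. (exp (- lam k * t) * inner x (phi k)) *\<^sub>R phi k)"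

text \<open>v is the mild solution in C([0,T]; D(A^(1/2))) of
  v' + A v + p(t) B v + p(t) B phi_1 = 0, v(0) = v0.\<close>
definition mild_solution ::
  "(nat \<Rightarrow> real) \<Rightarrow> (nat \<Rightarrow> 'a::{real_inner,complete_space,second_countable_topology})
   \<Rightarrow> ('a \<Rightarrow> 'a) \<Rightarrow> real \<Rightarrow> 'a \<Rightarrow> (real \<Rightarrow> real) \<Rightarrow> (real \<Rightarrow> 'a) \<Rightarrow> bool" where
  "mild_solution lam phi B T v0 p v \<longleftrightarrow>
     (\<forall>t\<in>{0..T}. v t \<in> frac_dom lam phi (1/2)) \<and>
     (\<forall>t\<in>{0..T}. ((\<lambda>s. frac_norm lam phi (1/2) (v s - v t)) \<longlongrightarrow> 0) (at t within {0..T})) \<and>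
     (\<forall>t\<in>{0..T}.
        set_integrable lborel {0..t} (\<lambda>s. p s *\<^sub>R sgrp lam phi (t - s) (B (v s) + B (phi 0))) \<and>
        v t = sgrp lam phi t v0
              - (LINT s:{0..t}|lborel. p s *\<^sub>R sgrp lam phi (t - s) (B (v s) + B (phi 0))))"

end

theory Submission
  imports Defs
begin

text \<open>
  Expanding the mild solution in the eigenbasis, each coefficient w_k = <v, phi_k> obeys a scalar
  Duhamel formula, and restarting it at a time s gives w_k(t) = e^(-lam_k (t - s)) w_k(s) - J_k
  with J_k the Duhamel integral over (s, t]. Weighting by 1 + lam_k, estimating J_k by
  Cauchy-Schwarz against the explicit integral of e^(-2 lam_k (t - r)), which absorbs the weight
  lam_k, and summing over k gives the one-step energy inequality
    z(t)^2 <= z(s)^2 + 2 z(s) G int_s^t |p| + (1/2 + t - s) G^2 int_s^t p^2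
  for z = ||v||_(1/2) and any bound G of ||B v + B phi_1|| on (s, t]. As G can be taken to be
  C_B (max z + ||phi_1||_(1/2)), comparing z^2 with
    (z(0)^2 + eps + (1 + eps) 2 C_B^2 (1 + lam_1) int_0^t p^2)
      * exp ((1 + eps) (2 C_B int_0^t |p| + t + C_B^2 int_0^t p^2))
  at a first crossing time and letting eps -> 0 gives a nonlinear Gronwall bound; the constraint
  ||p||_(L^2) <= N_T ||v_0|| then yields the constant C_(1,1).
\<close>

section \<open>Orthonormal expansions\<close>

definition orthonormal_seq :: "(nat \<Rightarrow> 'a::real_inner) \<Rightarrow> bool" where
  "orthonormal_seq e \<longleftrightarrow> (\<forall>i j. inner (e i) (e j) = (if i = j then 1 else 0))"

lemma orthonormal_seqD: "orthonormal_seq e \<Longrightarrow> inner (e i) (e j) = (if i = j then 1 else 0)"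
  by (simp add: orthonormal_seq_def)

lemma norm_orthonormal_seq: "orthonormal_seq e \<Longrightarrow> norm (e k) = 1"
  by (simp add: norm_eq_sqrt_inner orthonormal_seqD)

lemma inner_sum_orthonormal:
  assumes "orthonormal_seq e" "finite F"
  shows "inner (\<Sum>k\<in>F. c k *\<^sub>R e k) (e j) = (if j \<in> F then c j else 0)"
  using assms by (simp add: inner_sum_left orthonormal_seqD if_distrib[of "\<lambda>x. c _ * x"] sum.delta'
      cong: if_cong)

lemma norm_sum_orthonormal:
  assumes "orthonormal_seq e" "finite F"
  shows "(norm (\<Sum>k\<in>F. c k *\<^sub>R e k))\<^sup>2 = (\<Sum>k\<in>F. (c k)\<^sup>2)"
proof -
  have "(norm (\<Sum>k\<in>F. c k *\<^sub>R e k))\<^sup>2 = (\<Sum>j\<in>F. c j * inner (\<Sum>k\<in>F. c k *\<^sub>R e k) (e j))"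
    by (simp add: power2_norm_eq_inner inner_sum_right)
  also have "\<dots> = (\<Sum>j\<in>F. (c j)\<^sup>2)"
    using assms by (intro sum.cong) (auto simp: inner_sum_orthonormal power2_eq_square)
  finally show ?thesis .
qed

lemma bessel_inequality_finite:
  assumes "orthonormal_seq e" "finite F"
  shows "(\<Sum>k\<in>F. (inner x (e k))\<^sup>2) \<le> (norm x)\<^sup>2"
proof -
  define y where "y = (\<Sum>k\<in>F. inner x (e k) *\<^sub>R e k)"
  have xy: "inner x y = (\<Sum>k\<in>F. (inner x (e k))\<^sup>2)"
    by (simp add: y_def inner_sum_right power2_eq_square)
  have yy: "inner y y = (\<Sum>k\<in>F. (inner x (e k))\<^sup>2)"
    using norm_sum_orthonormal[OF assms] by (simp add: y_def power2_norm_eq_inner)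
  have "0 \<le> inner (x - y) (x - y)" by simp
  also have "\<dots> = inner x x - 2 * inner x y + inner y y"
    by (simp add: inner_diff_left inner_diff_right inner_commute)
  finally show ?thesis using xy yy by (simp add: power2_norm_eq_inner)
qed

lemma summable_bessel:
  assumes "orthonormal_seq e"
  shows "summable (\<lambda>k. (inner x (e k))\<^sup>2)"
  by (rule summableI_nonneg_bounded[where x="(norm x)\<^sup>2"])
     (auto intro: bessel_inequality_finite[OF assms])

lemma summable_orthonormal_series:
  fixes e :: "nat \<Rightarrow> 'a::{real_inner,complete_space}"
  assumes e: "orthonormal_seq e" and c: "summable (\<lambda>k. (c k)\<^sup>2)"
  shows "summable (\<lambda>k. c k *\<^sub>R e k)"
proof -
  define X where "X n = (\<Sum>k<n. c k *\<^sub>R e k)" for n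
  define S where "S n = (\<Sum>k<n. (c k)\<^sup>2)" for n
  have pythagoras: "(norm (X n - X m))\<^sup>2 = S n - S m" if "m \<le> n" for m n
  proof -
    have "X n - X m = (\<Sum>k\<in>{m..<n}. c k *\<^sub>R e k)" "S n - S m = (\<Sum>k\<in>{m..<n}. (c k)\<^sup>2)"
      using that by (simp_all add: X_def S_def lessThan_atLeast0 sum_diff_nat_ivl[of 0 m n])
    then show ?thesis by (simp add: norm_sum_orthonormal[OF e])
  qed
  have "Cauchy S"
    using c by (simp add: S_def[abs_def] summable_iff_convergent Cauchy_convergent_iff)
  have "Cauchy X"
  proof (rule CauchyI)
    fix r :: real assume r: "0 < r"
    then obtain M where M: "\<And>m n. M \<le> m \<Longrightarrow> M \<le> n \<Longrightarrow> norm (S m - S n) < r\<^sup>2"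
      using \<open>Cauchy S\<close> by (meson CauchyD zero_less_power)
    have "norm (X m - X n) < r" if "M \<le> m" "M \<le> n" for m n
    proof (rule power2_less_imp_less)
      show "(norm (X m - X n))\<^sup>2 < r\<^sup>2"
        using M[OF that] pythagoras[of m n] pythagoras[of n m]
        by (cases m n rule: le_cases) (auto simp: norm_minus_commute)
    qed (use r in simp)
    then show "\<exists>M. \<forall>m\<ge>M. \<forall>n\<ge>M. norm (X m - X n) < r" by blast
  qed
  then show ?thesis
    by (simp add: X_def[abs_def] summable_iff_convergent Cauchy_convergent_iff)
qed

lemma inner_orthonormal_series:
  fixes e :: "nat \<Rightarrow> 'a::{real_inner,complete_space}"
  assumes e: "orthonormal_seq e" and c: "summable (\<lambda>k. (c k)\<^sup>2)"
  shows "inner (\<Sum>k. c k *\<^sub>R e k) (e j) = c j"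
proof (rule LIMSEQ_unique)
  show "(\<lambda>n. inner (\<Sum>k<n. c k *\<^sub>R e k) (e j)) \<longlonglongrightarrow> inner (\<Sum>k. c k *\<^sub>R e k) (e j)"
    by (intro tendsto_intros summable_LIMSEQ summable_orthonormal_series[OF e c])
  have "\<forall>\<^sub>F n in sequentially. inner (\<Sum>k<n. c k *\<^sub>R e k) (e j) = c j"
    using eventually_gt_at_top[of j] by eventually_elim (simp add: inner_sum_orthonormal[OF e])
  then show "(\<lambda>n. inner (\<Sum>k<n. c k *\<^sub>R e k) (e j)) \<longlonglongrightarrow> c j"
    by (rule tendsto_eventually)
qed

lemma norm_orthonormal_series:
  fixes e :: "nat \<Rightarrow> 'a::{real_inner,complete_space}"
  assumes e: "orthonormal_seq e" and c: "summable (\<lambda>k. (c k)\<^sup>2)"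
  shows "(\<lambda>k. (c k)\<^sup>2) sums (norm (\<Sum>k. c k *\<^sub>R e k))\<^sup>2"
proof -
  have "(\<lambda>n. (norm (\<Sum>k<n. c k *\<^sub>R e k))\<^sup>2) \<longlonglongrightarrow> (norm (\<Sum>k. c k *\<^sub>R e k))\<^sup>2"
    by (intro tendsto_intros summable_LIMSEQ summable_orthonormal_series[OF e c])
  then show ?thesis
    by (simp add: sums_def norm_sum_orthonormal[OF e])
qed

lemma orthonormal_expansion:
  fixes e :: "nat \<Rightarrow> 'a::{real_inner,complete_space}"
  assumes e: "orthonormal_seq e" and complete: "closure (span (range e)) = UNIV"
  shows "(\<Sum>k. inner x (e k) *\<^sub>R e k) = x"
proof -
  define y where "y = (\<Sum>k. inner x (e k) *\<^sub>R e k)"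
  have "inner (x - y) (e j) = 0" for j
    by (simp add: y_def inner_diff_left inner_orthonormal_series[OF e summable_bessel[OF e]])
  then have "span (range e) \<subseteq> {z. inner (x - y) z = 0}"
    by (intro span_minimal) (auto simp: subspace_def inner_add_right)
  then have "closure (span (range e)) \<subseteq> {z. inner (x - y) z = 0}"
    by (rule closure_minimal) (intro closed_Collect_eq continuous_intros)
  then have "inner (x - y) (x - y) = 0"
    using complete by blast
  then show ?thesis by (simp add: y_def)
qed

lemma parseval_sums:
  fixes e :: "nat \<Rightarrow> 'a::{real_inner,complete_space}"
  assumes e: "orthonormal_seq e" and complete: "closure (span (range e)) = UNIV"
  shows "(\<lambda>k. (inner x (e k))\<^sup>2) sums (norm x)\<^sup>2"
  using norm_orthonormal_series[OF e summable_bessel[OF e]] orthonormal_expansion[OF e complete]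
  by simp

section \<open>The half power of the generator\<close>

locale eigenbasis =
  fixes lam :: "nat \<Rightarrow> real" and e :: "nat \<Rightarrow> 'a::{real_inner,complete_space}"
  assumes orthonormal: "orthonormal_seq e"
    and complete: "closure (span (range e)) = UNIV"
    and lam_nonneg: "0 \<le> lam k"
begin

abbreviation "dom_half \<equiv> frac_dom lam e (1/2)"
abbreviation "norm_half \<equiv> frac_norm lam e (1/2)"

lemma mem_dom_half_iff: "x \<in> dom_half \<longleftrightarrow> summable (\<lambda>k. lam k * (inner x (e k))\<^sup>2)"
  using lam_nonneg by (simp add: frac_dom_def)

lemma frac_pow_half: "frac_pow lam e (1/2) x = (\<Sum>k. (sqrt (lam k) * inner x (e k)) *\<^sub>R e k)"
  using lam_nonneg by (simp add: frac_pow_def powr_half_sqrt)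

lemma sq_frac_pow_half_coeff: "(sqrt (lam k) * inner x (e k))\<^sup>2 = lam k * (inner x (e k))\<^sup>2"
  using lam_nonneg by (simp add: power_mult_distrib)

lemma norm_half_sums:
  assumes "x \<in> dom_half"
  shows "(\<lambda>k. (1 + lam k) * (inner x (e k))\<^sup>2) sums (norm_half x)\<^sup>2"
proof -
  have "(\<lambda>k. lam k * (inner x (e k))\<^sup>2) sums (norm (frac_pow lam e (1/2) x))\<^sup>2"
    using norm_orthonormal_series[OF orthonormal, of "\<lambda>k. sqrt (lam k) * inner x (e k)"] assms
    by (simp add: frac_pow_half sq_frac_pow_half_coeff mem_dom_half_iff)
  with parseval_sums[OF orthonormal complete, of x]
  show ?thesis
    by (auto simp: frac_norm_def algebra_simps dest: sums_add)
qed

lemma norm_half_nonneg: "0 \<le> norm_half x"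
  by (simp add: frac_norm_def)

lemma norm_le_norm_half: "norm x \<le> norm_half x"
  by (simp add: frac_norm_def real_le_rsqrt)

lemma diff_in_dom_half:
  assumes x: "x \<in> dom_half" and y: "y \<in> dom_half"
  shows "x - y \<in> dom_half"
  unfolding mem_dom_half_iff
proof (rule summable_comparison_test')
  show "summable (\<lambda>k. 2 * (lam k * (inner x (e k))\<^sup>2) + 2 * (lam k * (inner y (e k))\<^sup>2))"
    using x y by (intro summable_add summable_mult) (simp_all add: mem_dom_half_iff)
  fix k
  have "(inner x (e k) - inner y (e k))\<^sup>2 \<le> 2 * (inner x (e k))\<^sup>2 + 2 * (inner y (e k))\<^sup>2"
    by (smt (verit) power2_diff power2_sum zero_le_power2)
  from mult_left_mono[OF this lam_nonneg[of k]]
  show "norm (lam k * (inner (x - y) (e k))\<^sup>2)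
      \<le> 2 * (lam k * (inner x (e k))\<^sup>2) + 2 * (lam k * (inner y (e k))\<^sup>2)"
    using lam_nonneg[of k] by (simp add: inner_diff_left algebra_simps)
qed

lemma frac_pow_half_diff:
  assumes x: "x \<in> dom_half" and y: "y \<in> dom_half"
  shows "frac_pow lam e (1/2) (x - y) = frac_pow lam e (1/2) x - frac_pow lam e (1/2) y"
proof -
  have "summable (\<lambda>k. (sqrt (lam k) * inner z (e k)) *\<^sub>R e k)" if "z \<in> dom_half" for z
    using that by (intro summable_orthonormal_series[OF orthonormal])
      (simp add: sq_frac_pow_half_coeff mem_dom_half_iff)
  from suminf_diff[OF this[OF x] this[OF y]] show ?thesis
    by (simp add: frac_pow_half inner_diff_left algebra_simps)
qed

lemma norm_half_diff_le:
  assumes "x \<in> dom_half" "y \<in> dom_half"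
  shows "\<bar>norm_half x - norm_half y\<bar> \<le> norm_half (x - y)"
proof -
  have pair: "norm_half u = norm (u, frac_pow lam e (1/2) u)" for u
    by (simp add: frac_norm_def norm_Pair)
  show ?thesis
    unfolding pair frac_pow_half_diff[OF assms]
    using norm_triangle_ineq3[of "(x, frac_pow lam e (1/2) x)" "(y, frac_pow lam e (1/2) y)"]
    by simp
qed

lemma sq_inner_basis: "(inner (e j) (e k))\<^sup>2 = (if k = j then 1 else 0)"
  by (simp add: orthonormal_seqD[OF orthonormal])

lemma basis_in_dom_half: "e j \<in> dom_half"
  using summable_single[of j "\<lambda>_. lam j"]
  by (simp add: mem_dom_half_iff sq_inner_basis if_distrib cong: if_cong)

lemma norm_half_basis: "norm_half (e j) = sqrt (1 + lam j)"
proof -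
  have "(\<lambda>k. if k = j then 1 + lam j else 0) sums (norm_half (e j))\<^sup>2"
    using norm_half_sums[OF basis_in_dom_half, of j]
    by (simp add: sq_inner_basis if_distrib cong: if_cong)
  then have "(norm_half (e j))\<^sup>2 = 1 + lam j"
    using sums_single[of j "\<lambda>_. 1 + lam j"] sums_unique2 by blast
  then show ?thesis
    using norm_half_nonneg by (simp add: real_sqrt_unique)
qed

lemma inner_sgrp:
  assumes "0 \<le> t"
  shows "inner (sgrp lam e t x) (e j) = exp (- lam j * t) * inner x (e j)"
  unfolding sgrp_def
proof (rule inner_orthonormal_series[OF orthonormal])
  show "summable (\<lambda>k. (exp (- lam k * t) * inner x (e k))\<^sup>2)"
  proof (rule summable_comparison_test'[OF summable_bessel[OF orthonormal, of x]])
    fix k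
    have "exp (- lam k * t) \<le> 1"
      using lam_nonneg[of k] assms by simp
    then show "norm ((exp (- lam k * t) * inner x (e k))\<^sup>2) \<le> (inner x (e k))\<^sup>2"
      by (simp add: power_mult_distrib mult_left_le_one_le power_le_one)
  qed
qed

lemma sgrp_0: "sgrp lam e 0 x = x"
  using orthonormal_expansion[OF orthonormal complete] by (simp add: sgrp_def)

end

section \<open>Scalar and integral inequalities\<close>

lemma le_add_if_sq_le_4_mult:
  fixes a b c :: real
  assumes "0 \<le> a" "0 \<le> b" "c\<^sup>2 \<le> 4 * a * b"
  shows "c \<le> a + b"
proof -
  have "(a + b)\<^sup>2 = 4 * a * b + (a - b)\<^sup>2"
    by (simp add: power2_eq_square algebra_simps)
  then have "c\<^sup>2 \<le> (a + b)\<^sup>2"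
    using assms(3) zero_le_power2[of "a - b"] by linarith
  moreover have "0 \<le> a + b"
    using assms(1,2) by simp
  ultimately show ?thesis
    by (rule power2_le_imp_le)
qed

text \<open>One mode of the energy estimate: x is the coefficient at the restart time, E the decay
  factor over the step and J the Duhamel integral, with J^2 <= U eta by Cauchy-Schwarz. The exact
  value 2 lam U = 1 - E^2 of the integral U of the squared decay factor absorbs the weight lam.\<close>

lemma restart_energy_le:
  fixes lam E x J U eta D :: real
  assumes lam: "0 \<le> lam" and E: "0 \<le> E" "E \<le> 1" and J: "J\<^sup>2 \<le> U * eta"
    and U: "2 * lam * U = 1 - E\<^sup>2" "0 \<le> U" "U \<le> D" and eta: "0 \<le> eta"
  shows "(1 + lam) * (E * x - J)\<^sup>2 \<le> (1 + lam) * x\<^sup>2 + 2 * \<bar>x\<bar> * \<bar>J\<bar> + (1/2 + D) * eta"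
proof -
  have E2: "0 \<le> 1 - E\<^sup>2"
    using E by (simp add: power_le_one)
  have "\<bar>E * x * J\<bar> \<le> \<bar>x\<bar> * \<bar>J\<bar>"
    using E by (simp add: abs_mult mult_left_le_one_le mult.assoc)
  then have cross: "- 2 * E * x * J \<le> 2 * \<bar>x\<bar> * \<bar>J\<bar>"
    by linarith
  have weighted_cross: "2 * lam * E * \<bar>x\<bar> * \<bar>J\<bar> \<le> lam * (1 - E\<^sup>2) * x\<^sup>2 + E\<^sup>2 * eta / 2"
  proof (rule le_add_if_sq_le_4_mult)
    have "(2 * lam * E * \<bar>x\<bar> * \<bar>J\<bar>)\<^sup>2 = 4 * lam\<^sup>2 * E\<^sup>2 * x\<^sup>2 * J\<^sup>2"
      by (simp add: power_mult_distrib)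
    also have "\<dots> \<le> 4 * lam\<^sup>2 * E\<^sup>2 * x\<^sup>2 * (U * eta)"
      using J by (intro mult_left_mono) auto
    also have "\<dots> = 4 * (lam * (2 * lam * U) * x\<^sup>2) * (E\<^sup>2 * eta / 2)"
      by (simp add: power2_eq_square algebra_simps)
    finally show "(2 * lam * E * \<bar>x\<bar> * \<bar>J\<bar>)\<^sup>2 \<le> 4 * (lam * (1 - E\<^sup>2) * x\<^sup>2) * (E\<^sup>2 * eta / 2)"
      by (simp only: U(1))
  qed (use lam E2 eta in simp_all)
  have "\<bar>lam * E * x * J\<bar> = lam * E * \<bar>x\<bar> * \<bar>J\<bar>"
    using lam E by (simp add: abs_mult)
  then have cross_lam: "- 2 * lam * E * x * J \<le> lam * (1 - E\<^sup>2) * x\<^sup>2 + E\<^sup>2 * eta / 2"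
    using weighted_cross by linarith
  have "(1 + lam) * J\<^sup>2 \<le> (1 + lam) * (U * eta)"
    using J lam by (intro mult_left_mono) auto
  also have "\<dots> = U * eta + (2 * lam * U) / 2 * eta"
    by (simp add: algebra_simps)
  finally have J_term: "(1 + lam) * J\<^sup>2 \<le> D * eta + (1 - E\<^sup>2) / 2 * eta"
    using mult_right_mono[OF U(3) eta] by (simp only: U(1))
  have "(1 + lam) * (E * x - J)\<^sup>2
      = (1 + lam) * x\<^sup>2 - (1 - E\<^sup>2) * x\<^sup>2 - lam * (1 - E\<^sup>2) * x\<^sup>2
        - 2 * E * x * J - 2 * lam * E * x * J + (1 + lam) * J\<^sup>2"
    by (simp add: power2_diff power_mult_distrib algebra_simps)
  also have "\<dots> \<le> (1 + lam) * x\<^sup>2 + 2 * \<bar>x\<bar> * \<bar>J\<bar> + (1/2 + D) * eta"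
  proof -
    have "(1/2 + D) * eta = D * eta + E\<^sup>2 * eta / 2 + (1 - E\<^sup>2) / 2 * eta"
      by (simp add: field_simps)
    then show ?thesis
      using cross cross_lam J_term mult_nonneg_nonneg[OF E2 zero_le_power2[of x]] by linarith
  qed
  finally show ?thesis .
qed

lemma set_integral_nonneg:
  fixes f :: "'a \<Rightarrow> real"
  assumes "\<And>x. x \<in> A \<Longrightarrow> 0 \<le> f x"
  shows "0 \<le> (LINT x:A|M. f x)"
  unfolding set_lebesgue_integral_def
  using assms by (intro Bochner_Integration.integral_nonneg) (auto simp: indicator_def)

lemma set_integral_Cauchy_Schwarz:
  fixes f u :: "'a \<Rightarrow> real"
  assumes f: "set_integrable M A (\<lambda>r. (f r)\<^sup>2)" and u: "set_integrable M A (\<lambda>r. (u r)\<^sup>2)"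
    and fu: "set_integrable M A (\<lambda>r. f r * u r)"
  shows "(LINT r:A|M. f r * u r)\<^sup>2 \<le> (LINT r:A|M. (f r)\<^sup>2) * (LINT r:A|M. (u r)\<^sup>2)"
proof -
  define F where "F = (LINT r:A|M. (f r)\<^sup>2)"
  define U where "U = (LINT r:A|M. (u r)\<^sup>2)"
  define J where "J = (LINT r:A|M. f r * u r)"
  have quadratic_nonneg: "0 \<le> a\<^sup>2 * U - 2 * a * J + F" for a
  proof -
    have "0 \<le> (LINT r:A|M. (a * u r - f r)\<^sup>2)"
      by (rule set_integral_nonneg) simp
    also have "\<dots> = (LINT r:A|M. a\<^sup>2 * (u r)\<^sup>2 - 2 * a * (f r * u r) + (f r)\<^sup>2)"
      by (simp add: power2_diff power_mult_distrib algebra_simps)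
    also have "\<dots> = a\<^sup>2 * U - 2 * a * J + F"
      using f u fu by (simp add: F_def U_def J_def)
    finally show ?thesis .
  qed
  have "0 \<le> U"
    unfolding U_def by (rule set_integral_nonneg) simp
  show ?thesis
  proof (cases "U = 0")
    case True
    have "J = 0"
    proof (rule ccontr)
      assume "J \<noteq> 0"
      with True quadratic_nonneg[of "(F + 1) / (2 * J)"] show False
        by (simp add: field_simps)
    qed
    with True show ?thesis by (simp add: J_def U_def)
  next
    case False
    with \<open>0 \<le> U\<close> have "0 < U" by simp
    with quadratic_nonneg[of "J / U"] have "J\<^sup>2 \<le> F * U"
      by (simp add: power2_eq_square field_simps)
    then show ?thesis by (simp add: J_def F_def U_def)
  qed
qed

lemma set_integral_split_Icc:
  fixes F :: "real \<Rightarrow> real"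
  assumes "a \<le> s" "s \<le> t" and F: "set_integrable lborel {a..t} F"
  shows "(LINT r:{a..t}|lborel. F r) = (LINT r:{a..s}|lborel. F r) + (LINT r:{s<..t}|lborel. F r)"
proof -
  have "set_integrable lborel {a..s} F" "set_integrable lborel {s<..t} F"
    using assms by (auto intro: set_integrable_subset[OF F])
  then have "(LINT r:{a..s} \<union> {s<..t}|lborel. F r)
      = (LINT r:{a..s}|lborel. F r) + (LINT r:{s<..t}|lborel. F r)"
    by (intro set_integral_Un) auto
  moreover have "{a..s} \<union> {s<..t} = {a..t}"
    using assms(1,2) by auto
  ultimately show ?thesis
    by simp
qed

lemma set_integral_sq_exp_decay:
  fixes lam s t :: real
  assumes lam: "0 \<le> lam" and st: "s \<le> t"
  defines "U \<equiv> LINT r:{s<..t}|lborel. (exp (- lam * (t - r)))\<^sup>2"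
  shows "set_integrable lborel {s<..t} (\<lambda>r. (exp (- lam * (t - r)))\<^sup>2)"
    and "2 * lam * U = 1 - (exp (- lam * (t - s)))\<^sup>2"
    and "0 \<le> U" and "U \<le> t - s"
proof -
  have sq: "(exp (- lam * (t - r)))\<^sup>2 = exp (2 * lam * r - 2 * lam * t)" for r
    by (simp add: power2_eq_square mult_exp_exp algebra_simps)
  have decay_le_1: "(exp (- lam * (t - r)))\<^sup>2 \<le> 1" if "r \<le> t" for r
    using lam that by (simp add: power_le_one)
  show int: "set_integrable lborel {s<..t} (\<lambda>r. (exp (- lam * (t - r)))\<^sup>2)"
    by (rule set_integrable_subset[of _ "{s..t}"]) (auto intro!: borel_integrable_atLeastAtMost' continuous_intros)
  show "0 \<le> U"
    unfolding U_def by (rule set_integral_nonneg) simp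
  have "U \<le> (LINT r:{s<..t}|lborel. 1)"
    unfolding U_def using int decay_le_1
    by (intro set_integral_mono) (auto intro!: set_integrable_subset[of _ "{s..t}"]
        borel_integrable_atLeastAtMost')
  then show "U \<le> t - s"
    using st by (simp add: set_integral_const)
  show "2 * lam * U = 1 - (exp (- lam * (t - s)))\<^sup>2"
  proof (cases "lam = 0")
    case False
    with lam have "0 < lam" by simp
    have "(LBINT r=s..t. exp (2 * lam * r - 2 * lam * t))
        = exp (2 * lam * t - 2 * lam * t) / (2 * lam) - exp (2 * lam * s - 2 * lam * t) / (2 * lam)"
    proof (rule interval_integral_FTC_finite)
      show "continuous_on {min s t..max s t} (\<lambda>r. exp (2 * lam * r - 2 * lam * t))"
        by (intro continuous_intros)
      show "((\<lambda>r. exp (2 * lam * r - 2 * lam * t) / (2 * lam)) has_vector_derivative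
          exp (2 * lam * x - 2 * lam * t)) (at x within {min s t..max s t})" for x
        using \<open>0 < lam\<close> by (auto intro!: derivative_eq_intros
            simp: has_real_derivative_iff_has_vector_derivative[symmetric])
    qed
    moreover have "(LBINT r=s..t. exp (2 * lam * r - 2 * lam * t)) = U"
      unfolding U_def sq using st by (rule interval_integral_Ioc)
    ultimately have "U = (1 - exp (2 * lam * s - 2 * lam * t)) / (2 * lam)"
      by (simp add: diff_divide_distrib)
    then show ?thesis
      using \<open>0 < lam\<close> sq[of s] by simp
  qed simp
qed

lemma set_borel_measurable_mult:
  fixes f g :: "'a \<Rightarrow> real"
  assumes "set_borel_measurable M A f" "set_borel_measurable M A g"
  shows "set_borel_measurable M A (\<lambda>x. f x * g x)"
proof -
  have "(\<lambda>x. indicator A x *\<^sub>R (f x * g x)) = (\<lambda>x. (indicator A x *\<^sub>R f x) * (indicator A x *\<^sub>R g x))"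
    by (auto simp: indicator_def fun_eq_iff)
  then show ?thesis
    using assms unfolding set_borel_measurable_def by simp
qed

lemma set_integral_inner_left:
  fixes F :: "'b \<Rightarrow> 'a::{real_inner,second_countable_topology}"
  assumes "set_integrable M A F"
  shows "set_integrable M A (\<lambda>s. inner (F s) c)"
    and "inner (LINT s:A|M. F s) c = (LINT s:A|M. inner (F s) c)"
proof -
  have F: "integrable M (\<lambda>s. indicator A s *\<^sub>R F s)"
    using assms by (simp add: set_integrable_def)
  show "set_integrable M A (\<lambda>s. inner (F s) c)"
    using integrable_inner_left[OF F, of c] by (simp add: set_integrable_def)
  show "inner (LINT s:A|M. F s) c = (LINT s:A|M. inner (F s) c)"
    using integral_inner_left[of c M "\<lambda>s. indicator A s *\<^sub>R F s"] F
    by (simp add: set_lebesgue_integral_def)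
qed

lemma set_integral_sum:
  fixes F :: "'i \<Rightarrow> 'b \<Rightarrow> real"
  assumes "\<And>k. k \<in> I \<Longrightarrow> set_integrable M A (F k)"
  shows "set_integrable M A (\<lambda>x. \<Sum>k\<in>I. F k x)"
    and "(LINT x:A|M. (\<Sum>k\<in>I. F k x)) = (\<Sum>k\<in>I. LINT x:A|M. F k x)"
  using assms
  by (simp_all add: set_integrable_def set_lebesgue_integral_def sum_distrib_left integral_sum)

section \<open>A nonlinear Gronwall inequality\<close>

lemma continuous_induction_less:
  fixes f g :: "real \<Rightarrow> real"
  assumes f: "continuous_on {0..T} f" and g: "continuous_on {0..T} g" and start: "f 0 < g 0"
    and step: "\<And>t. 0 < t \<Longrightarrow> t \<le> T \<Longrightarrow> (\<And>r. 0 \<le> r \<Longrightarrow> r < t \<Longrightarrow> f r < g r) \<Longrightarrow>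
      f t \<le> g t \<Longrightarrow> f t < g t"
    and t: "t \<in> {0..T}"
  shows "f t < g t"
proof (rule ccontr)
  define F where "F = {0..T} \<inter> (\<lambda>r. g r - f r) -` {..0}"
  assume "\<not> f t < g t"
  with t have "F \<noteq> {}"
    by (auto simp: F_def)
  moreover have "bdd_below F"
    by (auto simp: F_def intro: bdd_belowI[where m=0])
  moreover have "closed F"
    unfolding F_def by (rule continuous_closed_preimage) (auto intro!: continuous_intros f g)
  ultimately have "Inf F \<in> F"
    by (rule closed_contains_Inf)
  define ts where "ts = Inf F"
  have ts: "0 \<le> ts" "ts \<le> T" "g ts \<le> f ts"
    using \<open>Inf F \<in> F\<close> by (auto simp: F_def ts_def)
  have below: "f r < g r" if "0 \<le> r" "r < ts" for r
  proof (rule ccontr)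
    assume "\<not> f r < g r"
    with that ts have "r \<in> F"
      by (auto simp: F_def)
    then have "ts \<le> r"
      unfolding ts_def by (rule cInf_lower) fact
    with that show False by simp
  qed
  have "ts \<noteq> 0"
    using ts start by auto
  with ts have "0 < ts" by simp
  have "((\<lambda>r. g r - f r) \<longlongrightarrow> g ts - f ts) (at_left ts)"
  proof -
    have "((\<lambda>r. g r - f r) \<longlongrightarrow> g ts - f ts) (at ts within {0..T})"
      using ts f g by (intro tendsto_diff) (auto simp: continuous_on_def)
    then have "((\<lambda>r. g r - f r) \<longlongrightarrow> g ts - f ts) (at ts within {0..ts})"
      by (rule tendsto_within_subset) (use ts in auto)
    with \<open>0 < ts\<close> show ?thesis
      by (simp add: at_within_Icc_at_left)
  qed
  moreover have "\<forall>\<^sub>F r in at_left ts. 0 \<le> g r - f r"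
    using eventually_at_left_real[OF \<open>0 < ts\<close>] by eventually_elim (auto dest: below less_imp_le)
  ultimately have "f ts \<le> g ts"
    using tendsto_lowerbound by fastforce
  with step[OF \<open>0 < ts\<close> ts(2) below] ts(3) show False
    by simp
qed

lemma mult_exp_increment_ge:
  fixes g g' E d :: real
  assumes "0 \<le> g" "g \<le> g'" "1 \<le> E" "0 \<le> d"
  shows "(g' - g) + g * E * d \<le> g' * (E * exp d) - g * E"
proof -
  have "E * (1 + d) \<le> E * exp d"
    using assms(3) exp_ge_add_one_self[of d] by (intro mult_left_mono) auto
  then have "E + E * d \<le> E * exp d" "1 \<le> E * exp d"
    using assms(3,4) by (simp_all add: algebra_simps) (smt (verit) mult_nonneg_nonneg)
  then have "(g' - g) * 1 \<le> (g' - g) * (E * exp d)" "g * (E * d) \<le> g * (E * exp d - E)"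
    using assms(1,2) by (intro mult_left_mono; simp)+
  then show ?thesis
    by (simp add: algebra_simps)
qed

text \<open>The local step of the first-crossing argument below: on an interval of length Dl ending at
  the crossing time, z is bounded by M, the square root of the comparison function there, and
  the slack eps of the comparison function absorbs both the factor 1 + 2 Dl and the cross term
  2 C c M P1.\<close>

lemma gronwall_local_step:
  fixes C c M P1 P2 Dl eps Ps zs zt :: real
  assumes C: "0 \<le> C" and c: "0 \<le> c" and M: "0 \<le> zs" "zs \<le> M"
    and P: "0 \<le> P1" "0 \<le> P2" "P1\<^sup>2 \<le> Dl * P2" and Dl: "0 \<le> Dl" "Dl \<le> eps"
    and zs: "zs\<^sup>2 < Ps" and Ps: "(1 + 2 * Dl) * M\<^sup>2 \<le> (1 + eps) * Ps"
    and zt: "zt\<^sup>2 \<le> zs\<^sup>2 + 2 * zs * C * (M + c) * P1 + (1/2 + Dl) * C\<^sup>2 * (M + c)\<^sup>2 * P2"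
  shows "zt\<^sup>2 < Ps + (1 + eps) * (Ps * (2 * C * P1 + Dl + C\<^sup>2 * P2) + 2 * C\<^sup>2 * c\<^sup>2 * P2)"
proof -
  define X where "X = 2 * C * P1 + Dl + C\<^sup>2 * P2"
  define K where "K = C\<^sup>2 * c\<^sup>2 * P2"
  have "zs * (2 * C * (M + c) * P1) \<le> M * (2 * C * (M + c) * P1)"
    using M C c P by (intro mult_right_mono) auto
  moreover have "(M + c)\<^sup>2 \<le> 2 * M\<^sup>2 + 2 * c\<^sup>2"
    using zero_le_power2[of "M - c"] by (simp add: power2_diff power2_sum)
  then have "(1/2 + Dl) * C\<^sup>2 * (M + c)\<^sup>2 * P2 \<le> (1/2 + Dl) * C\<^sup>2 * (2 * M\<^sup>2 + 2 * c\<^sup>2) * P2"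
    using Dl P by (intro mult_right_mono mult_left_mono) auto
  ultimately have "zt\<^sup>2 \<le> zs\<^sup>2 + 2 * M * C * (M + c) * P1 + (1/2 + Dl) * C\<^sup>2 * (2 * M\<^sup>2 + 2 * c\<^sup>2) * P2"
    using zt by (simp add: ac_simps)
  also have "\<dots> = zs\<^sup>2 + M\<^sup>2 * (2 * C * P1) + 2 * C * c * M * P1 + (1 + 2 * Dl) * M\<^sup>2 * (C\<^sup>2 * P2)
      + (1 + 2 * Dl) * K"
    by (simp add: K_def power2_eq_square algebra_simps)
  also have "2 * C * c * M * P1 \<le> M\<^sup>2 * Dl + K"
  proof (rule le_add_if_sq_le_4_mult)
    have "(2 * C * c * M * P1)\<^sup>2 = 4 * C\<^sup>2 * c\<^sup>2 * M\<^sup>2 * P1\<^sup>2"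
      by (simp add: power_mult_distrib)
    also have "\<dots> \<le> 4 * C\<^sup>2 * c\<^sup>2 * M\<^sup>2 * (Dl * P2)"
      using P by (intro mult_left_mono) auto
    finally show "(2 * C * c * M * P1)\<^sup>2 \<le> 4 * (M\<^sup>2 * Dl) * K"
      by (simp add: K_def algebra_simps)
  qed (use Dl P in \<open>simp_all add: K_def\<close>)
  also have "zs\<^sup>2 + M\<^sup>2 * (2 * C * P1) + (M\<^sup>2 * Dl + K) + (1 + 2 * Dl) * M\<^sup>2 * (C\<^sup>2 * P2)
      + (1 + 2 * Dl) * K \<le> zs\<^sup>2 + (1 + 2 * Dl) * M\<^sup>2 * X + (1 + eps) * (2 * K)"
  proof -
    have "M\<^sup>2 * (2 * C * P1 + Dl) \<le> (1 + 2 * Dl) * M\<^sup>2 * (2 * C * P1 + Dl)"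
      using Dl C P by (simp add: algebra_simps)
    moreover have "(2 + 2 * Dl) * K \<le> (2 + 2 * eps) * K"
      using Dl P by (intro mult_right_mono) (auto simp: K_def)
    ultimately show ?thesis
      by (simp add: X_def algebra_simps)
  qed
  also have "\<dots> \<le> zs\<^sup>2 + (1 + eps) * Ps * X + (1 + eps) * (2 * K)"
    using Ps Dl C P by (simp add: X_def mult_right_mono)
  also have "\<dots> < Ps + (1 + eps) * (Ps * X + 2 * K)"
    using zs by (simp add: algebra_simps)
  finally show ?thesis
    by (simp add: X_def K_def mult.assoc)
qed

lemma left_point_with_slack:
  fixes f :: "real \<Rightarrow> real"
  assumes f: "continuous_on {0..T} f" and t: "0 < t" "t \<le> T" and pos: "0 < f t" and eps: "0 < eps"
  obtains s where "0 \<le> s" "s < t" "t - s \<le> eps" "(1 + 2 * (t - s)) * f t < (1 + eps) * f s"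
proof -
  have "(f \<longlongrightarrow> f t) (at t within {0..T})"
    using f t by (simp add: continuous_on_def)
  then have "(f \<longlongrightarrow> f t) (at t within {0..t})"
    by (rule tendsto_within_subset) (use t in auto)
  then have "(f \<longlongrightarrow> f t) (at_left t)"
    using t by (simp add: at_within_Icc_at_left)
  then have "((\<lambda>s. (1 + eps) * f s - (1 + 2 * (t - s)) * f t)
      \<longlongrightarrow> (1 + eps) * f t - (1 + 2 * (t - t)) * f t) (at_left t)"
    by (intro tendsto_intros)
  moreover have "0 < (1 + eps) * f t - (1 + 2 * (t - t)) * f t"
    using pos eps by (simp add: algebra_simps)
  ultimately have "\<forall>\<^sub>F s in at_left t. 0 < (1 + eps) * f s - (1 + 2 * (t - s)) * f t"
    by (rule order_tendstoD(1))
  moreover have "\<forall>\<^sub>F s in at_left t. s \<in> {max 0 (t - eps)<..<t}"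
    using t eps by (intro eventually_at_left_real) simp
  ultimately have "\<forall>\<^sub>F s in at_left t.
      0 < (1 + eps) * f s - (1 + 2 * (t - s)) * f t \<and> s \<in> {max 0 (t - eps)<..<t}"
    by (rule eventually_conj)
  then obtain s where "0 < (1 + eps) * f s - (1 + 2 * (t - s)) * f t" "s \<in> {max 0 (t - eps)<..<t}"
    using eventually_happens'[OF trivial_limit_at_left_real] by blast
  then show ?thesis
    by (intro that) auto
qed

context
  fixes z a b :: "real \<Rightarrow> real" and C c T :: real
  assumes C: "0 \<le> C" and c: "0 \<le> c"
    and z_cont: "continuous_on {0..T} z" and z_nonneg: "\<And>t. t \<in> {0..T} \<Longrightarrow> 0 \<le> z t"
    and a_cont: "continuous_on {0..T} a" and b_cont: "continuous_on {0..T} b"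
    and a_0: "a 0 = 0" and b_0: "b 0 = 0"
    and a_mono: "mono_on {0..T} a" and b_mono: "mono_on {0..T} b"
    and a_b: "\<And>s t. 0 \<le> s \<Longrightarrow> s \<le> t \<Longrightarrow> t \<le> T \<Longrightarrow> (a t - a s)\<^sup>2 \<le> (t - s) * (b t - b s)"
    and energy_step: "\<And>s t M. 0 \<le> s \<Longrightarrow> s \<le> t \<Longrightarrow> t \<le> T \<Longrightarrow>
      (\<And>r. r \<in> {s..t} \<Longrightarrow> z r \<le> M) \<Longrightarrow>
      (z t)\<^sup>2 \<le> (z s)\<^sup>2 + 2 * z s * C * (M + c) * (a t - a s)
        + (1/2 + (t - s)) * C\<^sup>2 * (M + c)\<^sup>2 * (b t - b s)"
begin

definition gronwall_comparison :: "real \<Rightarrow> real \<Rightarrow> real" where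
  "gronwall_comparison eps r = ((z 0)\<^sup>2 + eps + (1 + eps) * (2 * C\<^sup>2 * c\<^sup>2 * b r))
    * exp ((1 + eps) * (2 * C * a r + r + C\<^sup>2 * b r))"

lemma gronwall_comparison_pos:
  assumes "0 < eps" "0 \<le> r" "r \<le> T"
  shows "0 < gronwall_comparison eps r"
proof -
  have "0 \<le> b r"
    using assms b_0 mono_onD[OF b_mono, of 0 r] by simp
  then have "0 \<le> (1 + eps) * (2 * C\<^sup>2 * c\<^sup>2 * b r)"
    using assms(1) by simp
  with assms(1) have "0 < (z 0)\<^sup>2 + eps + (1 + eps) * (2 * C\<^sup>2 * c\<^sup>2 * b r)"
    using zero_le_power2[of "z 0"] by linarith
  then show ?thesis
    by (simp add: gronwall_comparison_def)
qed

lemma gronwall_comparison_increment: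
  assumes eps: "0 < eps" and sr: "0 \<le> s" "s \<le> r" "r \<le> T"
  shows "gronwall_comparison eps s + (1 + eps) * (gronwall_comparison eps s
      * (2 * C * (a r - a s) + (r - s) + C\<^sup>2 * (b r - b s)) + 2 * C\<^sup>2 * c\<^sup>2 * (b r - b s))
    \<le> gronwall_comparison eps r"
proof -
  define L where "L x = 2 * C * a x + x + C\<^sup>2 * b x" for x
  define G where "G x = (z 0)\<^sup>2 + eps + (1 + eps) * (2 * C\<^sup>2 * c\<^sup>2 * b x)" for x
  have ab: "a s \<le> a r" "b s \<le> b r" "0 \<le> a s" "0 \<le> b s"
    using sr a_mono b_mono a_0 b_0 mono_onD[of "{0..T}" a 0 s] mono_onD[of "{0..T}" b 0 s]
    by (auto intro: mono_onD)
  then have "L s \<le> L r" "0 \<le> L s" "G s \<le> G r" "0 \<le> G s"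
    using sr C eps by (auto simp: L_def G_def intro!: add_mono mult_left_mono)
  then have "(G r - G s) + G s * exp ((1 + eps) * L s) * ((1 + eps) * (L r - L s))
      \<le> G r * (exp ((1 + eps) * L s) * exp ((1 + eps) * (L r - L s))) - G s * exp ((1 + eps) * L s)"
    using eps by (intro mult_exp_increment_ge) auto
  moreover have "exp ((1 + eps) * L s) * exp ((1 + eps) * (L r - L s)) = exp ((1 + eps) * L r)"
    by (simp add: exp_add[symmetric] algebra_simps)
  ultimately show ?thesis
    by (simp add: gronwall_comparison_def L_def G_def algebra_simps)
qed

lemma gronwall_comparison_mono:
  assumes eps: "0 < eps" and sr: "0 \<le> s" "s \<le> r" "r \<le> T"
  shows "gronwall_comparison eps s \<le> gronwall_comparison eps r"
proof -
  have "a s \<le> a r" "b s \<le> b r"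
    using sr by (auto intro: mono_onD a_mono b_mono)
  then have "0 \<le> (1 + eps) * (gronwall_comparison eps s
      * (2 * C * (a r - a s) + (r - s) + C\<^sup>2 * (b r - b s)) + 2 * C\<^sup>2 * c\<^sup>2 * (b r - b s))"
    using sr eps C gronwall_comparison_pos[OF eps, of s]
    by (intro mult_nonneg_nonneg add_nonneg_nonneg) auto
  with gronwall_comparison_increment[OF eps sr] show ?thesis
    by linarith
qed

lemma continuous_on_gronwall_comparison: "continuous_on {0..T} (gronwall_comparison eps)"
  unfolding gronwall_comparison_def by (intro continuous_intros z_cont a_cont b_cont)

lemma gronwall_eps:
  assumes eps: "0 < eps" and t: "t \<in> {0..T}"
  shows "(z t)\<^sup>2 < gronwall_comparison eps t"
proof (rule continuous_induction_less[OF _ _ _ _ t])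
  show "continuous_on {0..T} (\<lambda>r. (z r)\<^sup>2)"
    by (intro continuous_intros z_cont)
  show "continuous_on {0..T} (gronwall_comparison eps)"
    by (rule continuous_on_gronwall_comparison)
  show "(z 0)\<^sup>2 < gronwall_comparison eps 0"
    using eps by (simp add: gronwall_comparison_def a_0 b_0)
next
  fix ts assume ts: "0 < ts" "ts \<le> T"
    and below: "\<And>r. 0 \<le> r \<Longrightarrow> r < ts \<Longrightarrow> (z r)\<^sup>2 < gronwall_comparison eps r"
    and at_ts: "(z ts)\<^sup>2 \<le> gronwall_comparison eps ts"
  define M where "M = sqrt (gronwall_comparison eps ts)"
  have M_sq: "M\<^sup>2 = gronwall_comparison eps ts"
    using gronwall_comparison_pos[OF eps, of ts] ts by (simp add: M_def)
  have z_le_M: "z r \<le> M" if "0 \<le> r" "r \<le> ts" for r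
  proof -
    have "(z r)\<^sup>2 \<le> gronwall_comparison eps ts"
      using that below[of r] at_ts gronwall_comparison_mono[OF eps, of r ts] ts
      by (cases "r = ts") auto
    then show ?thesis
      by (simp add: M_def real_le_rsqrt)
  qed
  obtain s where s: "0 \<le> s" "s < ts" "ts - s \<le> eps"
    and slack: "(1 + 2 * (ts - s)) * gronwall_comparison eps ts < (1 + eps) * gronwall_comparison eps s"
    by (rule left_point_with_slack[OF continuous_on_gronwall_comparison ts
          gronwall_comparison_pos[OF eps] eps]) (use ts in auto)
  have "(z ts)\<^sup>2 < gronwall_comparison eps s + (1 + eps) * (gronwall_comparison eps s
      * (2 * C * (a ts - a s) + (ts - s) + C\<^sup>2 * (b ts - b s)) + 2 * C\<^sup>2 * c\<^sup>2 * (b ts - b s))"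
  proof (rule gronwall_local_step[OF C c])
    show "0 \<le> z s" "z s \<le> M"
      using z_nonneg z_le_M s ts by auto
    show "0 \<le> a ts - a s" "0 \<le> b ts - b s"
      using mono_onD[OF a_mono, of s ts] mono_onD[OF b_mono, of s ts] s ts by auto
    show "(a ts - a s)\<^sup>2 \<le> (ts - s) * (b ts - b s)"
      using a_b[of s ts] s ts by auto
    show "(z s)\<^sup>2 < gronwall_comparison eps s"
      using below s by auto
    show "(1 + 2 * (ts - s)) * M\<^sup>2 \<le> (1 + eps) * gronwall_comparison eps s"
      using slack M_sq by simp
    show "(z ts)\<^sup>2 \<le> (z s)\<^sup>2 + 2 * z s * C * (M + c) * (a ts - a s)
        + (1/2 + (ts - s)) * C\<^sup>2 * (M + c)\<^sup>2 * (b ts - b s)"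
      using s ts z_le_M by (intro energy_step) auto
  qed (use s in auto)
  also have "\<dots> \<le> gronwall_comparison eps ts"
    using gronwall_comparison_increment[OF eps s(1) _ ts(2)] s by simp
  finally show "(z ts)\<^sup>2 < gronwall_comparison eps ts" .
qed

lemma nonlinear_gronwall:
  assumes t: "t \<in> {0..T}"
  shows "(z t)\<^sup>2 \<le> ((z 0)\<^sup>2 + 2 * C\<^sup>2 * c\<^sup>2 * b t) * exp (2 * C * a t + t + C\<^sup>2 * b t)"
proof (rule tendsto_lowerbound)
  show "((\<lambda>eps. ((z 0)\<^sup>2 + eps + (1 + eps) * (2 * C\<^sup>2 * c\<^sup>2 * b t))
      * exp ((1 + eps) * (2 * C * a t + t + C\<^sup>2 * b t)))
      \<longlongrightarrow> ((z 0)\<^sup>2 + 2 * C\<^sup>2 * c\<^sup>2 * b t) * exp (2 * C * a t + t + C\<^sup>2 * b t)) (at_right 0)"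
    by (rule tendsto_eq_intros refl | simp)+
  show "\<forall>\<^sub>F eps in at_right 0. (z t)\<^sup>2 \<le> ((z 0)\<^sup>2 + eps + (1 + eps) * (2 * C\<^sup>2 * c\<^sup>2 * b t))
      * exp ((1 + eps) * (2 * C * a t + t + C\<^sup>2 * b t))"
    using eventually_at_right_less
    by eventually_elim (use gronwall_eps t in \<open>auto simp: gronwall_comparison_def intro: less_imp_le\<close>)
qed simp

end

section \<open>Energy estimate for the mild solution\<close>

lemma continuous_on_dominated:
  fixes f :: "real \<Rightarrow> 'b::real_normed_vector"
  assumes d: "\<And>t. t \<in> S \<Longrightarrow> ((\<lambda>s. d s t) \<longlongrightarrow> 0) (at t within S)"
    and f: "\<And>s t. s \<in> S \<Longrightarrow> t \<in> S \<Longrightarrow> norm (f s - f t) \<le> d s t"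
  shows "continuous_on S f"
  unfolding continuous_on_def
proof
  fix t assume t: "t \<in> S"
  have "\<forall>\<^sub>F s in at t within S. norm (f s - f t) \<le> d s t"
    using t f by (auto simp: eventually_at_filter intro: always_eventually)
  with d[OF t] have "((\<lambda>s. f s - f t) \<longlongrightarrow> 0) (at t within S)"
    by (rule Lim_null_comparison[rotated])
  then show "(f \<longlongrightarrow> f t) (at t within S)"
    by (simp add: Lim_null[symmetric])
qed

locale controlled_mild_solution = eigenbasis lam e
  for lam :: "nat \<Rightarrow> real"
    and e :: "nat \<Rightarrow> 'a::{real_inner,complete_space,second_countable_topology}" +
  fixes B :: "'a \<Rightarrow> 'a" and DB :: "'a set" and C_B T :: real and v0 :: 'a
    and p :: "real \<Rightarrow> real" and v :: "real \<Rightarrow> 'a"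
  assumes B_lin: "lin_op_on DB B" and B_dom: "frac_dom lam e (1/2) \<subseteq> DB"
    and C_B_nonneg: "0 \<le> C_B"
    and B_bound: "\<And>x. x \<in> frac_dom lam e (1/2) \<Longrightarrow> norm (B x) \<le> C_B * frac_norm lam e (1/2) x"
    and p_meas: "set_borel_measurable lborel {0..T} p"
    and p_sq_int: "set_integrable lborel {0..T} (\<lambda>t. (p t)\<^sup>2)"
    and v_sol: "mild_solution lam e B T v0 p v"
begin

definition forcing :: "real \<Rightarrow> 'a" where
  "forcing r = B (v r) + B (e 0)"

definition v_coeff :: "nat \<Rightarrow> real \<Rightarrow> real" where
  "v_coeff k r = inner (v r) (e k)"

definition forcing_coeff :: "nat \<Rightarrow> real \<Rightarrow> real" where
  "forcing_coeff k r = p r * inner (forcing r) (e k)"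

lemma v_in_dom_half: "r \<in> {0..T} \<Longrightarrow> v r \<in> dom_half"
  using v_sol unfolding mild_solution_def by blast

lemma tendsto_norm_half_v:
  "t \<in> {0..T} \<Longrightarrow> ((\<lambda>s. norm_half (v s - v t)) \<longlongrightarrow> 0) (at t within {0..T})"
  using v_sol unfolding mild_solution_def by blast

lemma mild_formula:
  assumes "t \<in> {0..T}"
  shows "set_integrable lborel {0..t} (\<lambda>s. p s *\<^sub>R sgrp lam e (t - s) (forcing s))"
    and "v t = sgrp lam e t v0 - (LINT s:{0..t}|lborel. p s *\<^sub>R sgrp lam e (t - s) (forcing s))"
  using v_sol assms unfolding mild_solution_def forcing_def by blast+

lemma v_0:
  assumes "0 \<le> T"
  shows "v 0 = v0"
proof -
  have "v 0 = sgrp lam e 0 v0 - (LINT s:{0..0}|lborel. p s *\<^sub>R sgrp lam e (0 - s) (forcing s))"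
    using mild_formula(2)[of 0] assms by simp
  moreover have "(LINT s:{0..0}|lborel. p s *\<^sub>R sgrp lam e (0 - s) (forcing s)) = 0"
    unfolding set_lebesgue_integral_def
    by (rule integral_eq_zero_AE) (use AE_lborel_singleton[of 0] in eventually_elim, simp)
  ultimately show ?thesis
    by (simp add: sgrp_0)
qed

lemma B_diff:
  assumes "x \<in> dom_half" "y \<in> dom_half"
  shows "B x - B y = B (x - y)"
proof -
  have "x - y \<in> DB" "y \<in> DB"
    using assms diff_in_dom_half B_dom by auto
  with B_lin have "B ((x - y) + y) = B (x - y) + B y"
    unfolding lin_op_on_def by blast
  then show ?thesis
    by simp
qed

lemma continuous_on_forcing: "continuous_on {0..T} forcing"
proof (rule continuous_on_dominated)
  show "((\<lambda>s. C_B * norm_half (v s - v t)) \<longlongrightarrow> 0) (at t within {0..T})" if "t \<in> {0..T}" for t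
    using tendsto_mult_right_zero[OF tendsto_norm_half_v[OF that]] .
  show "norm (forcing s - forcing t) \<le> C_B * norm_half (v s - v t)"
    if "s \<in> {0..T}" "t \<in> {0..T}" for s t
    using B_bound B_diff diff_in_dom_half v_in_dom_half that by (simp add: forcing_def)
qed

lemma continuous_on_norm_half_v: "continuous_on {0..T} (\<lambda>r. norm_half (v r))"
proof (rule continuous_on_dominated)
  show "((\<lambda>s. norm_half (v s - v t)) \<longlongrightarrow> 0) (at t within {0..T})" if "t \<in> {0..T}" for t
    using tendsto_norm_half_v[OF that] .
  show "norm (norm_half (v s) - norm_half (v t)) \<le> norm_half (v s - v t)"
    if "s \<in> {0..T}" "t \<in> {0..T}" for s t
    using norm_half_diff_le v_in_dom_half that by simp
qed

lemma norm_forcing_le: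
  assumes "r \<in> {0..T}"
  shows "norm (forcing r) \<le> C_B * (norm_half (v r) + norm_half (e 0))"
proof -
  have "norm (forcing r) \<le> norm (B (v r)) + norm (B (e 0))"
    by (simp add: forcing_def norm_triangle_ineq)
  also have "\<dots> \<le> C_B * norm_half (v r) + C_B * norm_half (e 0)"
    using B_bound[OF v_in_dom_half[OF assms]] B_bound[OF basis_in_dom_half] by (rule add_mono)
  finally show ?thesis
    by (simp add: distrib_left)
qed

lemma set_integrable_abs_p: "set_integrable lborel {0..T} (\<lambda>r. \<bar>p r\<bar>)"
proof (rule set_integrable_bound[where f="\<lambda>r. 1 + (p r)\<^sup>2"])
  show "set_integrable lborel {0..T} (\<lambda>r. 1 + (p r)\<^sup>2)"
    by (intro set_integral_add p_sq_int borel_integrable_atLeastAtMost' continuous_intros)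
  have "norm \<bar>y\<bar> \<le> norm (1 + y\<^sup>2)" for y :: real
  proof -
    have "0 \<le> (\<bar>y\<bar> - 1)\<^sup>2" by simp
    then have "2 * \<bar>y\<bar> \<le> y\<^sup>2 + 1"
      by (simp add: power2_diff)
    moreover have "norm (1 + y\<^sup>2) = 1 + y\<^sup>2"
      by simp
    ultimately show ?thesis
      using zero_le_power2[of y] by simp
  qed
  then show "AE x in lborel. x \<in> {0..T} \<longrightarrow> norm \<bar>p x\<bar> \<le> norm (1 + (p x)\<^sup>2)"
    by simp
  have "(\<lambda>x. indicator {0..T} x *\<^sub>R \<bar>p x\<bar>) = (\<lambda>x. \<bar>indicator {0..T} x *\<^sub>R p x\<bar>)"
    by (auto simp: indicator_def fun_eq_iff)
  then show "set_borel_measurable lborel {0..T} (\<lambda>r. \<bar>p r\<bar>)"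
    using p_meas by (simp add: set_borel_measurable_def)
qed

lemma set_integrable_forcing_coeff_sq: "set_integrable lborel {0..T} (\<lambda>r. (forcing_coeff k r)\<^sup>2)"
proof -
  have "bounded (forcing ` {0..T})"
    by (intro compact_imp_bounded compact_continuous_image continuous_on_forcing compact_Icc)
  then obtain G where "\<forall>x \<in> forcing ` {0..T}. norm x \<le> G"
    by (auto simp: bounded_iff)
  then have G: "\<And>r. r \<in> {0..T} \<Longrightarrow> norm (forcing r) \<le> G"
    by blast
  show ?thesis
  proof (rule set_integrable_bound[where f="\<lambda>r. G\<^sup>2 * (p r)\<^sup>2"])
    show "set_integrable lborel {0..T} (\<lambda>r. G\<^sup>2 * (p r)\<^sup>2)"
      using p_sq_int by simp
    have "set_borel_measurable lborel {0..T} (\<lambda>r. inner (forcing r) (e k))"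
      unfolding set_borel_measurable_def
      using borel_measurable_continuous_on_indicator[of "{0..T}" "\<lambda>r. inner (forcing r) (e k)"]
      by (simp add: continuous_intros continuous_on_forcing)
    then have "set_borel_measurable lborel {0..T} (forcing_coeff k)"
      unfolding forcing_coeff_def[abs_def] by (rule set_borel_measurable_mult[OF p_meas])
    then show "set_borel_measurable lborel {0..T} (\<lambda>r. (forcing_coeff k r)\<^sup>2)"
      by (simp add: power2_eq_square set_borel_measurable_mult)
    show "AE r in lborel. r \<in> {0..T} \<longrightarrow> norm ((forcing_coeff k r)\<^sup>2) \<le> norm (G\<^sup>2 * (p r)\<^sup>2)"
    proof (intro AE_I2 impI)
      fix r assume "r \<in> {0..T}"
      have "\<bar>inner (forcing r) (e k)\<bar> \<le> G"
        using Cauchy_Schwarz_ineq2[of "forcing r" "e k"] G[OF \<open>r \<in> {0..T}\<close>]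
        by (simp add: norm_orthonormal_seq[OF orthonormal])
      then have "(inner (forcing r) (e k))\<^sup>2 \<le> G\<^sup>2"
        by (metis abs_ge_zero power2_abs power_mono)
      then have "(p r)\<^sup>2 * (inner (forcing r) (e k))\<^sup>2 \<le> (p r)\<^sup>2 * G\<^sup>2"
        by (rule mult_left_mono) simp
      then show "norm ((forcing_coeff k r)\<^sup>2) \<le> norm (G\<^sup>2 * (p r)\<^sup>2)"
        by (simp add: forcing_coeff_def power_mult_distrib mult.commute)
    qed
  qed
qed

lemma v_coeff_duhamel:
  assumes t: "t \<in> {0..T}"
  shows "set_integrable lborel {0..t} (\<lambda>r. exp (- lam k * (t - r)) * forcing_coeff k r)"
    and "v_coeff k t = exp (- lam k * t) * inner v0 (e k)
      - (LINT r:{0..t}|lborel. exp (- lam k * (t - r)) * forcing_coeff k r)"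
proof -
  note int = mild_formula(1)[OF t]
  have integrand: "inner (p r *\<^sub>R sgrp lam e (t - r) (forcing r)) (e k)
      = exp (- lam k * (t - r)) * forcing_coeff k r" if "r \<in> {0..t}" for r
    using that inner_sgrp[of "t - r" "forcing r" k] by (simp add: forcing_coeff_def)
  have "set_integrable lborel {0..t} (\<lambda>r. inner (p r *\<^sub>R sgrp lam e (t - r) (forcing r)) (e k))"
    by (rule set_integral_inner_left(1)[OF int])
  moreover have "set_integrable lborel {0..t} (\<lambda>r. inner (p r *\<^sub>R sgrp lam e (t - r) (forcing r)) (e k))
      = set_integrable lborel {0..t} (\<lambda>r. exp (- lam k * (t - r)) * forcing_coeff k r)"
    using integrand by (intro set_integrable_cong) auto
  ultimately show "set_integrable lborel {0..t} (\<lambda>r. exp (- lam k * (t - r)) * forcing_coeff k r)"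
    by simp
  have "v_coeff k t = inner (sgrp lam e t v0) (e k)
      - inner (LINT r:{0..t}|lborel. p r *\<^sub>R sgrp lam e (t - r) (forcing r)) (e k)"
    using mild_formula(2)[OF t] by (simp add: v_coeff_def inner_diff_left)
  also have "\<dots> = exp (- lam k * t) * inner v0 (e k)
      - (LINT r:{0..t}|lborel. exp (- lam k * (t - r)) * forcing_coeff k r)"
  proof -
    have "(LINT r:{0..t}|lborel. inner (p r *\<^sub>R sgrp lam e (t - r) (forcing r)) (e k))
        = (LINT r:{0..t}|lborel. exp (- lam k * (t - r)) * forcing_coeff k r)"
      using integrand by (intro set_lebesgue_integral_cong) auto
    then show ?thesis
      using t set_integral_inner_left(2)[OF int, of "e k"] by (simp add: inner_sgrp)
  qed
  finally show "v_coeff k t = exp (- lam k * t) * inner v0 (e k)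
      - (LINT r:{0..t}|lborel. exp (- lam k * (t - r)) * forcing_coeff k r)" .
qed

definition duhamel :: "real \<Rightarrow> real \<Rightarrow> nat \<Rightarrow> real" where
  "duhamel s t k = (LINT r:{s<..t}|lborel. exp (- lam k * (t - r)) * forcing_coeff k r)"

definition forcing_energy :: "real \<Rightarrow> real \<Rightarrow> nat \<Rightarrow> real" where
  "forcing_energy s t k = (LINT r:{s<..t}|lborel. (forcing_coeff k r)\<^sup>2)"

lemma v_coeff_restart:
  assumes st: "0 \<le> s" "s \<le> t" "t \<le> T"
  shows "v_coeff k t = exp (- lam k * (t - s)) * v_coeff k s - duhamel s t k"
proof -
  define I where "I r = (LINT r':{0..r}|lborel. exp (- lam k * (r - r')) * forcing_coeff k r')" for r
  define E where "E = exp (- lam k * (t - s))"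
  have E_mult: "exp (- lam k * (t - r)) = E * exp (- lam k * (s - r))" for r
    by (simp add: E_def exp_add[symmetric] algebra_simps)
  have "(LINT r:{0..t}|lborel. exp (- lam k * (t - r)) * forcing_coeff k r)
      = (LINT r:{0..s}|lborel. exp (- lam k * (t - r)) * forcing_coeff k r) + duhamel s t k"
    unfolding duhamel_def using st v_coeff_duhamel(1)[of t k] by (intro set_integral_split_Icc) auto
  also have "(LINT r:{0..s}|lborel. exp (- lam k * (t - r)) * forcing_coeff k r)
      = E * (LINT r:{0..s}|lborel. exp (- lam k * (s - r)) * forcing_coeff k r)"
    unfolding E_mult mult.assoc by (rule set_integral_mult_right)
  finally have I_t: "I t = E * I s + duhamel s t k"
    by (simp add: I_def)
  have "v_coeff k t = exp (- lam k * t) * inner v0 (e k) - I t"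
    "v_coeff k s = exp (- lam k * s) * inner v0 (e k) - I s"
    using st v_coeff_duhamel(2)[of t k] v_coeff_duhamel(2)[of s k] by (auto simp: I_def)
  moreover have "exp (- lam k * t) = E * exp (- lam k * s)"
    using E_mult[of 0] by simp
  ultimately show ?thesis
    unfolding E_def[symmetric] I_t by (simp add: right_diff_distrib mult.assoc)
qed

lemma v_coeff_energy_step:
  assumes st: "0 \<le> s" "s \<le> t" "t \<le> T"
  shows "(1 + lam k) * (v_coeff k t)\<^sup>2
    \<le> (1 + lam k) * (v_coeff k s)\<^sup>2 + 2 * \<bar>v_coeff k s\<bar> * \<bar>duhamel s t k\<bar>
      + (1/2 + (t - s)) * forcing_energy s t k"
proof -
  define U where "U = (LINT r:{s<..t}|lborel. (exp (- lam k * (t - r)))\<^sup>2)"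
  note decay = set_integral_sq_exp_decay[OF lam_nonneg[of k] st(2), folded U_def]
  have "(duhamel s t k)\<^sup>2 \<le> U * forcing_energy s t k"
    unfolding duhamel_def U_def forcing_energy_def
  proof (rule set_integral_Cauchy_Schwarz[OF decay(1)])
    show "set_integrable lborel {s<..t} (\<lambda>r. (forcing_coeff k r)\<^sup>2)"
      using st by (intro set_integrable_subset[OF set_integrable_forcing_coeff_sq]) auto
    show "set_integrable lborel {s<..t} (\<lambda>r. exp (- lam k * (t - r)) * forcing_coeff k r)"
      using st by (intro set_integrable_subset[OF v_coeff_duhamel(1)[of t]]) auto
  qed
  moreover have "0 \<le> forcing_energy s t k"
    unfolding forcing_energy_def by (rule set_integral_nonneg) simp
  moreover have "exp (- lam k * (t - s)) \<le> 1"
    using lam_nonneg[of k] st by simp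
  ultimately show ?thesis
    using restart_energy_le[OF lam_nonneg _ _ _ decay(2,3,4)] v_coeff_restart[OF st, of k] by simp
qed

lemma sum_weighted_forcing_coeff_le:
  assumes "r \<le> t"
  shows "(\<Sum>k<n. d k * (exp (- lam k * (t - r)) * forcing_coeff k r))
    \<le> sqrt (\<Sum>k<n. (d k)\<^sup>2) * (norm (forcing r) * \<bar>p r\<bar>)"
proof -
  define y where "y = (\<Sum>k<n. (d k * exp (- lam k * (t - r))) *\<^sub>R e k)"
  have "(d k * exp (- lam k * (t - r)))\<^sup>2 \<le> (d k)\<^sup>2" for k
  proof -
    have "(exp (- lam k * (t - r)))\<^sup>2 \<le> 1"
      using lam_nonneg[of k] assms by (simp add: power_le_one)
    then show ?thesis
      by (simp add: power_mult_distrib mult_left_le)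
  qed
  then have "(norm y)\<^sup>2 \<le> (\<Sum>k<n. (d k)\<^sup>2)"
    by (simp add: y_def norm_sum_orthonormal[OF orthonormal] sum_mono)
  then have "norm y \<le> sqrt (\<Sum>k<n. (d k)\<^sup>2)"
    by (simp add: real_le_rsqrt)
  then have "norm (forcing r) * norm y \<le> norm (forcing r) * sqrt (\<Sum>k<n. (d k)\<^sup>2)"
    by (rule mult_left_mono) simp
  with Cauchy_Schwarz_ineq2[of "forcing r" y]
  have "\<bar>inner (forcing r) y\<bar> \<le> norm (forcing r) * sqrt (\<Sum>k<n. (d k)\<^sup>2)"
    by linarith
  then have "\<bar>p r\<bar> * \<bar>inner (forcing r) y\<bar> \<le> \<bar>p r\<bar> * (norm (forcing r) * sqrt (\<Sum>k<n. (d k)\<^sup>2))"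
    by (intro mult_left_mono) simp_all
  moreover have "p r * inner (forcing r) y \<le> \<bar>p r\<bar> * \<bar>inner (forcing r) y\<bar>"
    by (simp add: abs_mult[symmetric])
  moreover have "(\<Sum>k<n. d k * (exp (- lam k * (t - r)) * forcing_coeff k r)) = p r * inner (forcing r) y"
    by (simp add: y_def forcing_coeff_def inner_sum_right sum_distrib_left mult_ac)
  ultimately show ?thesis
    by (simp add: mult_ac)
qed

text \<open>Minkowski's integral inequality, obtained by testing the integrand against the vector of
  the Duhamel integrals themselves.\<close>

lemma sqrt_sum_duhamel_le:
  assumes st: "0 \<le> s" "s \<le> t" "t \<le> T"
    and G: "0 \<le> G" "\<And>r. r \<in> {s<..t} \<Longrightarrow> norm (forcing r) \<le> G"
  shows "sqrt (\<Sum>k<n. (duhamel s t k)\<^sup>2) \<le> G * (LINT r:{s<..t}|lborel. \<bar>p r\<bar>)"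
proof -
  define S where "S = (\<Sum>k<n. (duhamel s t k)\<^sup>2)"
  define P where "P = (LINT r:{s<..t}|lborel. \<bar>p r\<bar>)"
  have S_nonneg: "0 \<le> S"
    by (simp add: S_def sum_nonneg)
  have int: "set_integrable lborel {s<..t}
      (\<lambda>r. duhamel s t k * (exp (- lam k * (t - r)) * forcing_coeff k r))" for k
    using st by (intro set_integrable_mult_right set_integrable_subset[OF v_coeff_duhamel(1)[of t]]) auto
  have "S = (LINT r:{s<..t}|lborel.
      (\<Sum>k<n. duhamel s t k * (exp (- lam k * (t - r)) * forcing_coeff k r)))"
    using set_integral_sum(2)[where I="{..<n}", OF int] by (simp add: S_def duhamel_def power2_eq_square)
  also have "\<dots> \<le> (LINT r:{s<..t}|lborel. sqrt S * (G * \<bar>p r\<bar>))"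
  proof (rule set_integral_mono)
    show "set_integrable lborel {s<..t}
        (\<lambda>r. \<Sum>k<n. duhamel s t k * (exp (- lam k * (t - r)) * forcing_coeff k r))"
      by (rule set_integral_sum(1)) (rule int)
    have "set_integrable lborel {s<..t} (\<lambda>r. \<bar>p r\<bar>)"
      using st by (intro set_integrable_subset[OF set_integrable_abs_p]) auto
    then show "set_integrable lborel {s<..t} (\<lambda>r. sqrt S * (G * \<bar>p r\<bar>))"
      by simp
    fix r assume r: "r \<in> {s<..t}"
    have "(\<Sum>k<n. duhamel s t k * (exp (- lam k * (t - r)) * forcing_coeff k r))
        \<le> sqrt S * (norm (forcing r) * \<bar>p r\<bar>)"
      unfolding S_def by (rule sum_weighted_forcing_coeff_le) (use r in simp)
    also have "\<dots> \<le> sqrt S * (G * \<bar>p r\<bar>)"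
      using G(2)[OF r] S_nonneg by (intro mult_left_mono mult_right_mono) simp_all
    finally show "(\<Sum>k<n. duhamel s t k * (exp (- lam k * (t - r)) * forcing_coeff k r))
        \<le> sqrt S * (G * \<bar>p r\<bar>)" .
  qed
  also have "\<dots> = sqrt S * (G * P)"
    by (simp add: P_def)
  finally have "sqrt S * sqrt S \<le> sqrt S * (G * P)"
    using S_nonneg by simp
  moreover have "0 \<le> G * P"
    using G(1) by (simp add: P_def set_integral_nonneg)
  ultimately have "sqrt S \<le> G * P"
    using S_nonneg mult_left_le_imp_le[of "sqrt S" "sqrt S" "G * P"] by (cases "S = 0") auto
  then show ?thesis
    by (simp add: S_def P_def)
qed

lemma sum_forcing_energy_le:
  assumes st: "0 \<le> s" "s \<le> t" "t \<le> T" and G: "\<And>r. r \<in> {s<..t} \<Longrightarrow> norm (forcing r) \<le> G"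
  shows "(\<Sum>k<n. forcing_energy s t k) \<le> G\<^sup>2 * (LINT r:{s<..t}|lborel. (p r)\<^sup>2)"
proof -
  have int: "set_integrable lborel {s<..t} (\<lambda>r. (forcing_coeff k r)\<^sup>2)" for k
    using st by (intro set_integrable_subset[OF set_integrable_forcing_coeff_sq]) auto
  have "(\<Sum>k<n. (forcing_coeff k r)\<^sup>2) \<le> G\<^sup>2 * (p r)\<^sup>2" if r: "r \<in> {s<..t}" for r
  proof -
    have "(\<Sum>k<n. (forcing_coeff k r)\<^sup>2) = (p r)\<^sup>2 * (\<Sum>k<n. (inner (forcing r) (e k))\<^sup>2)"
      by (simp add: forcing_coeff_def power_mult_distrib sum_distrib_left)
    also have "\<dots> \<le> (p r)\<^sup>2 * (norm (forcing r))\<^sup>2"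
      by (intro mult_left_mono bessel_inequality_finite[OF orthonormal]) auto
    also have "\<dots> \<le> (p r)\<^sup>2 * G\<^sup>2"
      using G[OF r] by (intro mult_left_mono power_mono) auto
    finally show ?thesis
      by (simp add: mult.commute)
  qed
  moreover have "set_integrable lborel {s<..t} (\<lambda>r. (p r)\<^sup>2)"
    using st by (intro set_integrable_subset[OF p_sq_int]) auto
  ultimately have "(LINT r:{s<..t}|lborel. (\<Sum>k<n. (forcing_coeff k r)\<^sup>2))
      \<le> (LINT r:{s<..t}|lborel. G\<^sup>2 * (p r)\<^sup>2)"
    by (intro set_integral_mono set_integral_sum(1) int) auto
  then show ?thesis
    using set_integral_sum(2)[where I="{..<n}", OF int] by (simp add: forcing_energy_def)
qed

lemma sum_coeff_duhamel_le:
  assumes st: "0 \<le> s" "s \<le> t" "t \<le> T"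
    and G: "0 \<le> G" "\<And>r. r \<in> {s<..t} \<Longrightarrow> norm (forcing r) \<le> G"
  shows "(\<Sum>k<n. \<bar>v_coeff k s\<bar> * \<bar>duhamel s t k\<bar>)
    \<le> norm_half (v s) * (G * (LINT r:{s<..t}|lborel. \<bar>p r\<bar>))"
proof -
  have "(\<Sum>k<n. \<bar>v_coeff k s\<bar> * \<bar>duhamel s t k\<bar>)
      \<le> sqrt (\<Sum>k<n. (v_coeff k s)\<^sup>2) * sqrt (\<Sum>k<n. (duhamel s t k)\<^sup>2)"
    using Cauchy_Schwarz_ineq_sum[of "\<lambda>k. \<bar>v_coeff k s\<bar>" "\<lambda>k. \<bar>duhamel s t k\<bar>" "{..<n}"]
    by (simp add: real_le_rsqrt real_sqrt_mult[symmetric])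
  also have "\<dots> \<le> norm_half (v s) * (G * (LINT r:{s<..t}|lborel. \<bar>p r\<bar>))"
  proof (rule mult_mono)
    have "(\<Sum>k<n. (v_coeff k s)\<^sup>2) \<le> (norm (v s))\<^sup>2"
      unfolding v_coeff_def by (rule bessel_inequality_finite[OF orthonormal]) simp
    then have "sqrt (\<Sum>k<n. (v_coeff k s)\<^sup>2) \<le> norm (v s)"
      using real_sqrt_le_mono by fastforce
    then show "sqrt (\<Sum>k<n. (v_coeff k s)\<^sup>2) \<le> norm_half (v s)"
      using norm_le_norm_half[of "v s"] by linarith
    show "sqrt (\<Sum>k<n. (duhamel s t k)\<^sup>2) \<le> G * (LINT r:{s<..t}|lborel. \<bar>p r\<bar>)"
      by (rule sqrt_sum_duhamel_le[OF st G])
  qed (simp_all add: norm_half_nonneg sum_nonneg)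
  finally show ?thesis .
qed

lemma norm_half_energy_step:
  assumes st: "0 \<le> s" "s \<le> t" "t \<le> T"
    and G: "0 \<le> G" "\<And>r. r \<in> {s<..t} \<Longrightarrow> norm (forcing r) \<le> G"
  shows "(norm_half (v t))\<^sup>2 \<le> (norm_half (v s))\<^sup>2
      + 2 * norm_half (v s) * G * (LINT r:{s<..t}|lborel. \<bar>p r\<bar>)
      + (1/2 + (t - s)) * G\<^sup>2 * (LINT r:{s<..t}|lborel. (p r)\<^sup>2)" (is "_ \<le> ?bound")
proof -
  have sums: "(\<lambda>k. (1 + lam k) * (v_coeff k r)\<^sup>2) sums (norm_half (v r))\<^sup>2" if "r \<in> {0..T}" for r
    unfolding v_coeff_def by (rule norm_half_sums[OF v_in_dom_half[OF that]])
  have "(\<Sum>k<n. (1 + lam k) * (v_coeff k t)\<^sup>2) \<le> ?bound" for n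
  proof -
    have "(\<Sum>k<n. (1 + lam k) * (v_coeff k t)\<^sup>2)
        \<le> (\<Sum>k<n. (1 + lam k) * (v_coeff k s)\<^sup>2) + 2 * (\<Sum>k<n. \<bar>v_coeff k s\<bar> * \<bar>duhamel s t k\<bar>)
          + (1/2 + (t - s)) * (\<Sum>k<n. forcing_energy s t k)"
      using sum_mono[OF v_coeff_energy_step[OF st]]
      by (simp add: sum.distrib sum_distrib_left mult.assoc)
    moreover have "(\<Sum>k<n. (1 + lam k) * (v_coeff k s)\<^sup>2) \<le> (norm_half (v s))\<^sup>2"
      using sums[of s] st lam_nonneg sum_le_suminf[of "\<lambda>k. (1 + lam k) * (v_coeff k s)\<^sup>2" "{..<n}"]
      by (auto simp: sums_iff add_nonneg_nonneg)
    moreover have "(1/2 + (t - s)) * (\<Sum>k<n. forcing_energy s t k)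
        \<le> (1/2 + (t - s)) * (G\<^sup>2 * (LINT r:{s<..t}|lborel. (p r)\<^sup>2))"
      using st by (intro mult_left_mono sum_forcing_energy_le[OF st G(2)]) auto
    moreover have "2 * (\<Sum>k<n. \<bar>v_coeff k s\<bar> * \<bar>duhamel s t k\<bar>)
        \<le> 2 * norm_half (v s) * G * (LINT r:{s<..t}|lborel. \<bar>p r\<bar>)"
      using sum_coeff_duhamel_le[OF st G, of n] by (simp add: mult.assoc)
    ultimately show ?thesis
      by (simp add: mult.assoc)
  qed
  then have "(\<Sum>k. (1 + lam k) * (v_coeff k t)\<^sup>2) \<le> ?bound"
    by (rule suminf_le_const[rotated]) (use sums[of t] st in \<open>simp add: sums_iff\<close>)
  then show ?thesis
    using sums[of t] st by (simp add: sums_iff)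
qed

definition int_abs_p :: "real \<Rightarrow> real" where
  "int_abs_p t = (LINT r:{0..t}|lborel. \<bar>p r\<bar>)"

definition int_sq_p :: "real \<Rightarrow> real" where
  "int_sq_p t = (LINT r:{0..t}|lborel. (p r)\<^sup>2)"

lemma int_p_increment:
  assumes "0 \<le> s" "s \<le> t" "t \<le> T"
  shows "int_abs_p t - int_abs_p s = (LINT r:{s<..t}|lborel. \<bar>p r\<bar>)"
    and "int_sq_p t - int_sq_p s = (LINT r:{s<..t}|lborel. (p r)\<^sup>2)"
  using assms
    set_integral_split_Icc[OF assms(1,2) set_integrable_subset[OF set_integrable_abs_p]]
    set_integral_split_Icc[OF assms(1,2) set_integrable_subset[OF p_sq_int]]
  by (simp_all add: int_abs_p_def int_sq_p_def)

lemma int_p_0: "int_abs_p 0 = 0" "int_sq_p 0 = 0"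
  using AE_lborel_singleton[of 0]
  by (auto simp: int_abs_p_def int_sq_p_def set_lebesgue_integral_def intro!: integral_eq_zero_AE
      elim!: AE_mp)

lemma mono_on_int_p: "mono_on {0..T} int_abs_p" "mono_on {0..T} int_sq_p"
proof -
  have "int_abs_p r \<le> int_abs_p s \<and> int_sq_p r \<le> int_sq_p s" if "0 \<le> r" "r \<le> s" "s \<le> T" for r s
    using int_p_increment[OF that] set_integral_nonneg[of "{r<..s}" "\<lambda>r. \<bar>p r\<bar>" lborel]
      set_integral_nonneg[of "{r<..s}" "\<lambda>r. (p r)\<^sup>2" lborel]
    by simp
  then show "mono_on {0..T} int_abs_p" "mono_on {0..T} int_sq_p"
    by (auto intro!: mono_onI)
qed

lemma int_abs_p_increment_sq_le:
  assumes st: "0 \<le> s" "s \<le> t" "t \<le> T"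
  shows "(int_abs_p t - int_abs_p s)\<^sup>2 \<le> (t - s) * (int_sq_p t - int_sq_p s)"
proof -
  have "set_integrable lborel {s<..t} (\<lambda>r. \<bar>p r\<bar>)" "set_integrable lborel {s<..t} (\<lambda>r. (p r)\<^sup>2)"
    "set_integrable lborel {s<..t} (\<lambda>r. 1::real)"
    using st by (auto intro!: set_integrable_subset[OF set_integrable_abs_p]
        set_integrable_subset[OF p_sq_int] set_integrable_subset[of _ "{s..t}"]
        borel_integrable_atLeastAtMost')
  then have "(LINT r:{s<..t}|lborel. \<bar>p r\<bar> * 1)\<^sup>2
      \<le> (LINT r:{s<..t}|lborel. \<bar>p r\<bar>\<^sup>2) * (LINT r:{s<..t}|lborel. 1\<^sup>2)"
    by (intro set_integral_Cauchy_Schwarz) simp_all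
  then show ?thesis
    using st by (simp add: int_p_increment set_integral_const mult.commute)
qed

lemma continuous_on_int_p: "continuous_on {0..T} int_abs_p" "continuous_on {0..T} int_sq_p"
proof -
  have "int_abs_p t = integral {0..t} (\<lambda>r. \<bar>p r\<bar>)" "int_sq_p t = integral {0..t} (\<lambda>r. (p r)\<^sup>2)"
    if "t \<in> {0..T}" for t
    using that set_integrable_subset[OF set_integrable_abs_p, of "{0..t}"]
      set_integrable_subset[OF p_sq_int, of "{0..t}"]
    by (auto simp: int_abs_p_def int_sq_p_def set_borel_integral_eq_integral)
  moreover have "continuous_on {0..T} (\<lambda>t. integral {0..t} (\<lambda>r. \<bar>p r\<bar>))"
    "continuous_on {0..T} (\<lambda>t. integral {0..t} (\<lambda>r. (p r)\<^sup>2))"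
    using set_borel_integral_eq_integral(1)[OF set_integrable_abs_p]
      set_borel_integral_eq_integral(1)[OF p_sq_int]
    by (auto intro: indefinite_integral_continuous_1)
  ultimately show "continuous_on {0..T} int_abs_p" "continuous_on {0..T} int_sq_p"
    by (auto intro: continuous_on_eq)
qed

lemma norm_half_energy_bound:
  assumes t: "t \<in> {0..T}"
  shows "(norm_half (v t))\<^sup>2 \<le> ((norm_half v0)\<^sup>2 + 2 * C_B\<^sup>2 * (1 + lam 0) * int_sq_p t)
      * exp (2 * C_B * int_abs_p t + t + C_B\<^sup>2 * int_sq_p t)"
proof -
  have "(norm_half (v t))\<^sup>2 \<le> ((norm_half (v 0))\<^sup>2 + 2 * C_B\<^sup>2 * (norm_half (e 0))\<^sup>2 * int_sq_p t)
      * exp (2 * C_B * int_abs_p t + t + C_B\<^sup>2 * int_sq_p t)"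
  proof (rule nonlinear_gronwall[OF C_B_nonneg norm_half_nonneg continuous_on_norm_half_v
        norm_half_nonneg continuous_on_int_p int_p_0 mono_on_int_p int_abs_p_increment_sq_le _ t])
    fix s t' M assume st: "0 \<le> s" "s \<le> t'" "t' \<le> T" and M: "\<And>r. r \<in> {s..t'} \<Longrightarrow> norm_half (v r) \<le> M"
    define G where "G = C_B * (M + norm_half (e 0))"
    have G_nonneg: "0 \<le> G"
      using M[of s] st C_B_nonneg norm_half_nonneg[of "v s"] norm_half_nonneg[of "e 0"]
      by (simp add: G_def)
    have forcing_le_G: "norm (forcing r) \<le> G" if "r \<in> {s<..t'}" for r
    proof -
      have "C_B * (norm_half (v r) + norm_half (e 0)) \<le> G"
        using M[of r] that C_B_nonneg unfolding G_def by (intro mult_left_mono add_right_mono) auto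
      with norm_forcing_le[of r] that st show ?thesis
        by auto
    qed
    from norm_half_energy_step[OF st G_nonneg forcing_le_G]
    show "(norm_half (v t'))\<^sup>2 \<le> (norm_half (v s))\<^sup>2
        + 2 * norm_half (v s) * C_B * (M + norm_half (e 0)) * (int_abs_p t' - int_abs_p s)
        + (1/2 + (t' - s)) * C_B\<^sup>2 * (M + norm_half (e 0))\<^sup>2 * (int_sq_p t' - int_sq_p s)"
      by (simp add: G_def int_p_increment[OF st] power_mult_distrib mult.assoc)
  qed
  then show ?thesis
    using t v_0 norm_half_basis[of 0] lam_nonneg[of 0] by simp
qed

lemma int_p_bounds:
  assumes t: "t \<in> {0..T}"
  shows "0 \<le> int_sq_p t" "int_sq_p t \<le> int_sq_p T" "int_abs_p t \<le> sqrt T * sqrt (int_sq_p T)"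
proof -
  show "0 \<le> int_sq_p t" "int_sq_p t \<le> int_sq_p T"
    using t mono_onD[OF mono_on_int_p(2), of 0 t] mono_onD[OF mono_on_int_p(2), of t T]
    by (auto simp: int_p_0)
  have "int_abs_p T \<le> sqrt (T * int_sq_p T)"
    using t int_abs_p_increment_sq_le[of 0 T] by (auto simp: int_p_0 real_le_rsqrt)
  then show "int_abs_p t \<le> sqrt T * sqrt (int_sq_p T)"
    using t mono_onD[OF mono_on_int_p(1), of t T] by (simp add: real_sqrt_mult)
qed

end

lemma energy_bound_le_C11:
  fixes C N Z T t l a b :: real
  assumes "0 \<le> C" "0 \<le> N" "0 \<le> Z" "t \<le> T" "0 \<le> l"
    and a: "a \<le> sqrt T * (N * Z)" and b: "0 \<le> b" "b \<le> N\<^sup>2 * Z\<^sup>2"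
  shows "(Z\<^sup>2 + 2 * C\<^sup>2 * (1 + l) * b) * exp (2 * C * a + t + C\<^sup>2 * b)
    \<le> exp (C * N * ((5/2) * C * N * Z + 2 * sqrt T) * Z + T)
      * (1 + (5/2) * C\<^sup>2 * (1 + sqrt l)\<^sup>2 * N\<^sup>2
          + (3/2) * C\<^sup>2 * N\<^sup>2 * (C\<^sup>2 * (1 + sqrt l)\<^sup>2 * N\<^sup>2 + 1) * Z\<^sup>2)
      * Z\<^sup>2"
proof -
  define q where "q = (1 + sqrt l)\<^sup>2"
  have "1 + l \<le> q"
    using assms(5) by (simp add: q_def power2_sum)
  then have "2 * C\<^sup>2 * (1 + l) * b \<le> 2 * C\<^sup>2 * q * (N\<^sup>2 * Z\<^sup>2)"
    using b assms(5) by (intro mult_mono mult_left_mono) (auto simp: q_def)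
  moreover have "0 \<le> (1/2) * C\<^sup>2 * q * N\<^sup>2 * Z\<^sup>2 + (3/2) * C\<^sup>2 * N\<^sup>2 * (C\<^sup>2 * q * N\<^sup>2 + 1) * Z\<^sup>2 * Z\<^sup>2"
    by (simp add: q_def)
  ultimately have prefactor: "Z\<^sup>2 + 2 * C\<^sup>2 * (1 + l) * b
      \<le> (1 + (5/2) * C\<^sup>2 * q * N\<^sup>2 + (3/2) * C\<^sup>2 * N\<^sup>2 * (C\<^sup>2 * q * N\<^sup>2 + 1) * Z\<^sup>2) * Z\<^sup>2"
    by (simp add: algebra_simps)
  have "2 * C * a \<le> 2 * C * (sqrt T * (N * Z))" "C\<^sup>2 * b \<le> C\<^sup>2 * (N\<^sup>2 * Z\<^sup>2)"
    using a b assms(1) by (simp_all add: mult_left_mono)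
  moreover have "0 \<le> (3/2) * C\<^sup>2 * (N\<^sup>2 * Z\<^sup>2)"
    by simp
  ultimately have exponent: "2 * C * a + t + C\<^sup>2 * b \<le> C * N * ((5/2) * C * N * Z + 2 * sqrt T) * Z + T"
    using assms(4) by (simp add: power2_eq_square algebra_simps)
  have "(Z\<^sup>2 + 2 * C\<^sup>2 * (1 + l) * b) * exp (2 * C * a + t + C\<^sup>2 * b)
      \<le> ((1 + (5/2) * C\<^sup>2 * q * N\<^sup>2 + (3/2) * C\<^sup>2 * N\<^sup>2 * (C\<^sup>2 * q * N\<^sup>2 + 1) * Z\<^sup>2) * Z\<^sup>2)
        * exp (C * N * ((5/2) * C * N * Z + 2 * sqrt T) * Z + T)"
  proof (rule mult_mono)
    have "0 \<le> Z\<^sup>2 + 2 * C\<^sup>2 * (1 + l) * b"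
      using b assms(5) by simp
    with prefactor show "0 \<le> (1 + (5/2) * C\<^sup>2 * q * N\<^sup>2 + (3/2) * C\<^sup>2 * N\<^sup>2 * (C\<^sup>2 * q * N\<^sup>2 + 1) * Z\<^sup>2)
        * Z\<^sup>2"
      by linarith
  qed (use prefactor exponent in simp_all)
  then show ?thesis
    by (simp add: q_def mult_ac)
qed

lemma (in controlled_mild_solution) norm_half_sq_le_C11:
  assumes t: "t \<in> {0..T}" and N: "0 \<le> N" "sqrt (int_sq_p T) \<le> N * norm_half v0"
  shows "(norm_half (v t))\<^sup>2 \<le>
     exp (C_B * N * ((5/2) * C_B * N * norm_half v0 + 2 * sqrt T) * norm_half v0 + T)
     * (1 + (5/2) * C_B\<^sup>2 * (1 + sqrt (lam 0))\<^sup>2 * N\<^sup>2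
          + (3/2) * C_B\<^sup>2 * N\<^sup>2 * (C_B\<^sup>2 * (1 + sqrt (lam 0))\<^sup>2 * N\<^sup>2 + 1) * (norm_half v0)\<^sup>2)
     * (norm_half v0)\<^sup>2"
proof (rule order_trans[OF norm_half_energy_bound[OF t] energy_bound_le_C11])
  have "T \<in> {0..T}"
    using t by auto
  then have "0 \<le> int_sq_p T"
    by (rule int_p_bounds(1))
  then have "int_sq_p T = (sqrt (int_sq_p T))\<^sup>2"
    by simp
  also have "\<dots> \<le> (N * norm_half v0)\<^sup>2"
    using N(2) \<open>0 \<le> int_sq_p T\<close> by (intro power_mono) simp_all
  finally show "int_sq_p t \<le> N\<^sup>2 * (norm_half v0)\<^sup>2"
    using int_p_bounds(2)[OF t] by (simp add: power_mult_distrib)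
  show "int_abs_p t \<le> sqrt T * (N * norm_half v0)"
    using int_p_bounds(3)[OF t] mult_left_mono[OF N(2), of "sqrt T"] t by simp
qed (use t N C_B_nonneg lam_nonneg norm_half_nonneg int_p_bounds(1)[OF t] in auto)

text \<open>The domain of A^(1/2), its graph norm and the semigroup are all defined through the spectral
  data lam and phi.\<close>

theorem proposition2p5:
  fixes D :: "'a::{real_inner,complete_space,second_countable_topology} set"
    and A :: "'a \<Rightarrow> 'a"
    and lam :: "nat \<Rightarrow> real" and phi :: "nat \<Rightarrow> 'a"
    and DB :: "'a set" and B :: "'a \<Rightarrow> 'a"
    and C_B N_T T :: real and v0 :: 'a and p :: "real \<Rightarrow> real" and v :: "real \<Rightarrow> 'a"
  assumes A_sa: "self_adjoint_op D A"
    and A_nonneg: "\<forall>x\<in>D. inner (A x) x \<ge> 0"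
    and A_res: "\<exists>l>0. compact_resolvent_at D A l"
    and lam_nonneg: "0 \<le> lam 0" and lam_mono: "mono lam"
    and phi_D: "\<forall>k. phi k \<in> D"
    and phi_eig: "\<forall>k. A (phi k) = lam k *\<^sub>R phi k"
    and phi_orth: "\<forall>i j. inner (phi i) (phi j) = (if i = j then 1 else 0)"
    and phi_basis: "closure (span (range phi)) = UNIV"
    and B_lin: "lin_op_on DB B"
    and B_dom: "frac_dom lam phi (1/2) \<subseteq> DB"
    and C_B_pos: "C_B > 0"
    and B_bound: "\<forall>x\<in>frac_dom lam phi (1/2). norm (B x) \<le> C_B * frac_norm lam phi (1/2) x"
    and T_pos: "T > 0"
    and v0_dom: "v0 \<in> frac_dom lam phi (1/2)"
    and p_meas: "set_borel_measurable lborel {0..T} p"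
    and p_L2: "set_integrable lborel {0..T} (\<lambda>t. (p t)\<^sup>2)"
    and N_T_pos: "N_T > 0"
    and p_bound: "sqrt (LINT t:{0..T}|lborel. (p t)\<^sup>2) \<le> N_T * norm v0"
    and v_sol: "mild_solution lam phi B T v0 p v"
  shows "\<forall>t\<in>{0..T}. (frac_norm lam phi (1/2) (v t))\<^sup>2 \<le>
     exp (C_B * N_T * ((5/2) * C_B * N_T * frac_norm lam phi (1/2) v0 + 2 * sqrt T)
            * frac_norm lam phi (1/2) v0 + T)
     * (1 + (5/2) * C_B\<^sup>2 * (1 + sqrt (lam 0))\<^sup>2 * N_T\<^sup>2
          + (3/2) * C_B\<^sup>2 * N_T\<^sup>2 * (C_B\<^sup>2 * (1 + sqrt (lam 0))\<^sup>2 * N_T\<^sup>2 + 1)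
            * (frac_norm lam phi (1/2) v0)\<^sup>2)
     * (frac_norm lam phi (1/2) v0)\<^sup>2"
proof -
  have lam_nonneg_all: "0 \<le> lam k" for k
    using lam_nonneg monoD[OF lam_mono, of 0 k] by simp
  interpret controlled_mild_solution lam phi B DB C_B T v0 p v
    using phi_orth phi_basis lam_nonneg_all B_lin B_dom C_B_pos B_bound p_meas p_L2 v_sol
    by unfold_locales (auto simp: orthonormal_seq_def)
  have "sqrt (int_sq_p T) \<le> N_T * norm_half v0"
    using p_bound mult_left_mono[OF norm_le_norm_half[of v0], of N_T] N_T_pos
    unfolding int_sq_p_def by linarith
  with N_T_pos show ?thesis
    by (intro ballI norm_half_sq_le_C11) auto
qed

end
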